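(* Let $N_1,\dots,N_n$ be independent and let $\mathcal J\subseteq\{1,\dots,n\}^2$ be any set of ordered pairs ($(j,k)\in\mathcal J\Rightarrow j\le k$), $1-\alpha\in(0,1)$, $\delta=\alpha/(2|\mathcal J|)$. Put $Y_i=\varphi N_i/v_i$, $\mu_i=\mathbb E[Y_i]$, assume $\mu_1\le\dots\le\mu_n$, and set $v_{j:k}=\sum_{i=j}^kv_i$, $Z_{j:k}=\frac1{v_{j:k}}\sum_{i=j}^kv_iY_i$. In each of the following three cases, the bounds $L^\alpha_{\mathbf Y,i}=\sup_{(j,k)\in\mathcal J:\mu_i\ge\mu_k}l^\delta(Z_{j:k},v_{j:k},\varphi,\kappa)$ and $U^\alpha_{\mathbf Y,i}=\inf_{(j,k)\in\mathcal J:\mu_i\le\mu_j}u^\delta(Z_{j:k},v_{j:k},\varphi,\kappa)$ (with $\kappa$ the cumulant function of the respective family) satisfy $$\mathbb P\big(L^\alpha_{\mathbf Y,i}\le\mu_i\le U^\alpha_{\mathbf Y,i}\text{ for all }i\in\{1,\dots,n\}\big)\ge1-\alpha,$$ and they are given explicitly by: (i) Binomial case ($N_i\sim\mathrm{Bin}(v_i/\varphi,\mu_i)$, $v_i/\varphi\in\mathbb N$, $\mu_i\in(0,1)$): $L^\alpha_{\mathbf Y,i}=\sup_{(j,k)\in\mathcal J:\mu_i\ge\mu_k}q_B(\delta;v_{j:k}Z_{j:k}/\varphi,1+v_{j:k}/\varphi-v_{j:k}Z_{j:k}/\varphi)\mathbf 1_{\{Z_{j:k}>0\}}$ and $U^\alpha_{\mathbf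 Y,i}=\inf_{(j,k)\in\mathcal J:\mu_i\le\mu_j}\big[q_B(1-\delta;1+v_{j:k}Z_{j:k}/\varphi,v_{j:k}/\varphi-v_{j:k}Z_{j:k}/\varphi)\mathbf 1_{\{Z_{j:k}<1\}}+\mathbf 1_{\{Z_{j:k}=1\}}\big]$. (ii) Poisson case ($N_i\sim\mathrm{Poi}(\mu_iv_i/\varphi)$, $\mu_i>0$): $L^\alpha_{\mathbf Y,i}=\sup_{(j,k)\in\mathcal J:\mu_i\ge\mu_k}\frac{\varphi\,q_\Gamma(\delta;v_{j:k}Z_{j:k}/\varphi,1)}{v_{j:k}}\mathbf 1_{\{Z_{j:k}>0\}}$ and $U^\alpha_{\mathbf Y,i}=\inf_{(j,k)\in\mathcal J:\mu_i\le\mu_j}\frac{\varphi\,q_\Gamma(1-\delta;1+v_{j:k}Z_{j:k}/\varphi,1)}{v_{j:k}}$. (iii) Negative binomial case ($N_i$ negative binomial with shape $\gamma_i=v_i/\varphi$ and $p_i=\mu_i/(1+\mu_i)$, i.e. $\mathbb P(N_i=l)=\frac{\Gamma(l+\gamma_i)}{\Gamma(\gamma_i)\,l!}p_i^l(1-p_i)^{\gamma_i}$, $\mu_i>0$): $L^\alpha_{\mathbf Y,i}=\sup_{(j,k)\in\mathcal J:\mu_i\ge\mu_k}\frac{q_B(\delta;v_{j:k}Z_{j:k}/\varphi,v_{j:k}/\varphi)}{1-q_B(\delta;v_{j:k}Z_{j:k}/\varphi,v_{j:k}/\varphi)}\mathbf 1_{\{Z_{j:k}>0\}}$ and $U^\alpha_{\mathbf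 Y,i}=\inf_{(j,k)\in\mathcal J:\mu_i\le\mu_j}\frac{q_B(1-\delta;1+v_{j:k}Z_{j:k}/\varphi,v_{j:k}/\varphi)}{1-q_B(1-\delta;1+v_{j:k}Z_{j:k}/\varphi,v_{j:k}/\varphi)}$.
   Context: In each case $Y_i=\varphi N_i/v_i\sim\mathrm{EDF}(\theta_i,v_i,\varphi,\kappa)$ for the appropriate cumulant function $\kappa$, canonical parameter $\theta_i=h(\mu_i)$ in the interior of the effective domain, volume $v_i>0$ and dispersion $\varphi>0$ (reproductive form of the exponential dispersion family; $N_i$ is its additive form). For a random variable $W$ with mean $\mu$ in this family with volume $v$, $F(y;h(\mu),v,\varphi,\kappa)=\mathbb P(W\le y)$ and $F^*(y;h(\mu),v,\varphi,\kappa)=\mathbb P(W<y)$; $l^{\delta}(y,v,\varphi,\kappa)=\inf\{\mu:F^*(y;h(\mu),v,\varphi,\kappa)\le1-\delta\}$ and $u^{\delta}(y,v,\varphi,\kappa)=\sup\{\mu:F(y;h(\mu),v,\varphi,\kappa)\ge\delta\}$, the inf/sup being over the mean parameter space ($(0,1)$ for binomial, $(0,\infty)$ otherwise), with $\inf\emptyset$ the supremum and $\sup\emptyset$ the infimum of the mean parameter space. A set of ordered pairs is $\mathcal J\subseteq\{1,\dots,n\}^2$ with $j\le k$ for all $(j,k)\in\mathcal J$. $q_B(\delta;a,b)$ is the $\delta$-quantile of the Beta$(a,b)$ distribution; $q_\Gamma(\delta;\gamma,c)$ is the $\delta$-quantile of the gamma distribution with shape $\gamma$ and scale $c$. *)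

theory Defs
  imports "HOL-Probability.Probability"
begin

definition bin_pf :: "nat \<Rightarrow> real \<Rightarrow> nat \<Rightarrow> real" where
  "bin_pf m p l = real (m choose l) * p ^ l * (1 - p) ^ (m - l)"

definition poi_pf :: "real \<Rightarrow> nat \<Rightarrow> real" where
  "poi_pf r l = r ^ l / fact l * exp (- r)"

definition nb_pf :: "real \<Rightarrow> real \<Rightarrow> nat \<Rightarrow> real" where
  "nb_pf g p l = Gamma (real l + g) / (Gamma g * fact l) * p ^ l * (1 - p) powr g"

text \<open>The three families, parametrised as  phi v mu l  (dispersion, volume, mean):
  point probability of the additive form N with Y = phi N / v of mean mu.\<close>
definition bin_fam :: "real \<Rightarrow> real \<Rightarrow> real \<Rightarrow> nat \<Rightarrow> real" where
  "bin_fam phi v mu = bin_pf (nat \<lfloor>v / phi\<rfloor>) mu"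

definition poi_fam :: "real \<Rightarrow> real \<Rightarrow> real \<Rightarrow> nat \<Rightarrow> real" where
  "poi_fam phi v mu = poi_pf (mu * v / phi)"

definition nb_fam :: "real \<Rightarrow> real \<Rightarrow> real \<Rightarrow> nat \<Rightarrow> real" where
  "nb_fam phi v mu = nb_pf (v / phi) (mu / (1 + mu))"

definition edf_cdf :: "(real \<Rightarrow> real \<Rightarrow> real \<Rightarrow> nat \<Rightarrow> real) \<Rightarrow> real \<Rightarrow> real \<Rightarrow> real \<Rightarrow> real \<Rightarrow> real" where
  "edf_cdf fam phi v mu y = (\<Sum>l. if phi * real l / v \<le> y then fam phi v mu l else 0)"

definition edf_cdf_strict :: "(real \<Rightarrow> real \<Rightarrow> real \<Rightarrow> nat \<Rightarrow> real) \<Rightarrow> real \<Rightarrow> real \<Rightarrow> real \<Rightarrow> real \<Rightarrow> real" where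
  "edf_cdf_strict fam phi v mu y = (\<Sum>l. if phi * real l / v < y then fam phi v mu l else 0)"

definition l_delta :: "(real \<Rightarrow> real \<Rightarrow> real \<Rightarrow> nat \<Rightarrow> real) \<Rightarrow> real set \<Rightarrow> real \<Rightarrow> real \<Rightarrow> real \<Rightarrow> real \<Rightarrow> ereal" where
  "l_delta fam Theta delta y v phi =
     (let S = {mu \<in> Theta. edf_cdf_strict fam phi v mu y \<le> 1 - delta}
      in if S = {} then Sup (ereal ` Theta) else Inf (ereal ` S))"

definition u_delta :: "(real \<Rightarrow> real \<Rightarrow> real \<Rightarrow> nat \<Rightarrow> real) \<Rightarrow> real set \<Rightarrow> real \<Rightarrow> real \<Rightarrow> real \<Rightarrow> real \<Rightarrow> ereal" where
  "u_delta fam Theta delta y v phi =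
     (let S = {mu \<in> Theta. delta \<le> edf_cdf fam phi v mu y}
      in if S = {} then Inf (ereal ` Theta) else Sup (ereal ` S))"

definition beta_density :: "real \<Rightarrow> real \<Rightarrow> real \<Rightarrow> real" where
  "beta_density a b t = (if 0 < t \<and> t < 1 then t powr (a - 1) * (1 - t) powr (b - 1) / Beta a b else 0)"

definition beta_cdf :: "real \<Rightarrow> real \<Rightarrow> real \<Rightarrow> real" where
  "beta_cdf a b x = (LINT t:{..x}|lborel. beta_density a b t)"

definition q_B :: "real \<Rightarrow> real \<Rightarrow> real \<Rightarrow> real" where
  "q_B delta a b = Inf {x. delta \<le> beta_cdf a b x}"

definition gamma_density :: "real \<Rightarrow> real \<Rightarrow> real \<Rightarrow> real" where
  "gamma_density g c t = (if 0 < t then t powr (g - 1) * exp (- t / c) / (Gamma g * c powr g) else 0)"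

definition gamma_cdf :: "real \<Rightarrow> real \<Rightarrow> real \<Rightarrow> real" where
  "gamma_cdf g c x = (LINT t:{..x}|lborel. gamma_density g c t)"

definition q_Gamma :: "real \<Rightarrow> real \<Rightarrow> real \<Rightarrow> real" where
  "q_Gamma delta g c = Inf {x. delta \<le> gamma_cdf g c x}"

definition vsum :: "(nat \<Rightarrow> real) \<Rightarrow> nat \<Rightarrow> nat \<Rightarrow> real" where
  "vsum v j k = (\<Sum>i = j..k. v i)"

definition Zjk :: "real \<Rightarrow> (nat \<Rightarrow> real) \<Rightarrow> (nat \<Rightarrow> 'a \<Rightarrow> nat) \<Rightarrow> 'a \<Rightarrow> nat \<Rightarrow> nat \<Rightarrow> real" where
  "Zjk phi v N \<omega> j k = (\<Sum>i = j..k. v i * (phi * real (N i \<omega>) / v i)) / vsum v j k"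

definition conf_L :: "(nat \<times> nat) set \<Rightarrow> (nat \<Rightarrow> real) \<Rightarrow> nat \<Rightarrow> (nat \<Rightarrow> nat \<Rightarrow> ereal) \<Rightarrow> ereal" where
  "conf_L J mu i b = Sup ((\<lambda>(j, k). b j k) ` {(j, k) \<in> J. mu k \<le> mu i})"

definition conf_U :: "(nat \<times> nat) set \<Rightarrow> (nat \<Rightarrow> real) \<Rightarrow> nat \<Rightarrow> (nat \<Rightarrow> nat \<Rightarrow> ereal) \<Rightarrow> ereal" where
  "conf_U J mu i b = Inf ((\<lambda>(j, k). b j k) ` {(j, k) \<in> J. mu i \<le> mu j})"

end

theory Submission
  imports Defs
begin

(*
  For a block (j, k) in J the count N_j + ... + N_k is stochastically sandwiched between the
  laws of the same family with volume v_{j:k} and means mu_j and mu_k: the three families are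
  closed under convolution and stochastically increasing in the mean, and mu is monotone on the
  block.  Hence each of the events F*(Z_{j:k}; mu_k) > 1 - delta and F(Z_{j:k}; mu_j) < delta has
  probability at most delta.  Off their union over J, of probability at most 2 delta |J| = alpha,
  every pair entering L_i has l^delta <= mu_k <= mu_i and every pair entering U_i has
  u^delta >= mu_j >= mu_i.

  The closed forms come from the classical identities expressing the binomial, Poisson and
  negative binomial distribution functions through Beta and Gamma distribution functions
  (differentiate in the parameter and telescope); they turn the infimum and supremum defining
  l^delta and u^delta into quantiles.
*)

section \<open>Partial sums of the count distributions\<close>

lemma DERIV_sum_atMost_telescope:
  fixes f :: "real \<Rightarrow> nat \<Rightarrow> real" and d :: "nat \<Rightarrow> real"
  assumes "((\<lambda>t. f t 0) has_real_derivative - d 0) (at t)"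
    and "\<And>l. l < x \<Longrightarrow> ((\<lambda>t. f t (Suc l)) has_real_derivative d l - d (Suc l)) (at t)"
  shows "((\<lambda>t. \<Sum>l\<le>x. f t l) has_real_derivative - d x) (at t)"
  using assms(2)
proof (induction x)
  case (Suc x)
  have "((\<lambda>t. (\<Sum>l\<le>x. f t l) + f t (Suc x)) has_real_derivative - d x + (d x - d (Suc x))) (at t)"
    using Suc by (intro DERIV_add) auto
  then show ?case by simp
qed (use assms(1) in simp)

lemma DERIV_poi_pf_sum:
  "((\<lambda>r. \<Sum>l\<le>x. poi_pf r l) has_real_derivative - poi_pf r x) (at r)"
proof (rule DERIV_sum_atMost_telescope)
  show "((\<lambda>r. poi_pf r 0) has_real_derivative - poi_pf r 0) (at r)"
    by (auto intro!: derivative_eq_intros simp: poi_pf_def)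
  fix l
  have "((\<lambda>r. r ^ n * exp (- r)) has_real_derivative
      real n * r ^ (n - 1) * exp (- r) - r ^ n * exp (- r)) (at r)" for n
    by (auto intro!: derivative_eq_intros simp: algebra_simps)
  from DERIV_cdivide[OF this[of "Suc l"], of "fact (Suc l)"]
  show "((\<lambda>r. poi_pf r (Suc l)) has_real_derivative poi_pf r l - poi_pf r (Suc l)) (at r)"
    by (simp add: poi_pf_def fact_Suc field_simps del: of_nat_Suc)
qed

lemma DERIV_bin_pf_sum:
  fixes p :: real
  assumes "x < m"
  shows "((\<lambda>p. \<Sum>l\<le>x. bin_pf m p l) has_real_derivative
    - (real m * real ((m - 1) choose x) * p ^ x * (1 - p) ^ (m - 1 - x))) (at p)"
proof (rule DERIV_sum_atMost_telescope)
  have monomial: "((\<lambda>p. p ^ n * (1 - p) ^ k) has_real_derivative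
      real n * p ^ (n - 1) * (1 - p) ^ k - real k * p ^ n * (1 - p) ^ (k - 1)) (at p)" for n k
    by (auto intro!: derivative_eq_intros simp: algebra_simps)
  from monomial[of 0 m]
  show "((\<lambda>p. bin_pf m p 0) has_real_derivative
      - (real m * real ((m - 1) choose 0) * p ^ 0 * (1 - p) ^ (m - 1 - 0))) (at p)"
    by (simp add: bin_pf_def)
  fix l assume "l < x"
  define k where "k = m - Suc (Suc l)"
  have k: "m - Suc l = Suc k" and e: "m - 1 - l = Suc k" "m - 1 - Suc l = k"
    using \<open>l < x\<close> assms unfolding k_def by auto
  have f: "(\<lambda>p. bin_pf m p (Suc l)) = (\<lambda>p. real (m choose Suc l) * (p ^ Suc l * (1 - p) ^ Suc k))"
    by (simp add: bin_pf_def k fun_eq_iff mult.assoc)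
  have "real (m choose Suc l) *
      (real (Suc l) * p ^ (Suc l - 1) * (1 - p) ^ Suc k - real (Suc k) * p ^ Suc l * (1 - p) ^ (Suc k - 1))
    = (real (m choose Suc l) * real (Suc l)) * p ^ l * (1 - p) ^ Suc k
    - (real (m choose Suc l) * real (Suc k)) * p ^ Suc l * (1 - p) ^ k"
    by (simp add: algebra_simps del: of_nat_Suc)
  also have "real (m choose Suc l) * real (Suc l) = real m * real ((m - 1) choose l)"
    unfolding of_nat_mult[symmetric] using Suc_times_binomial_eq[of "m - 1" l] assms
    by (simp add: mult.commute)
  also have "real (m choose Suc l) * real (Suc k) = real m * real ((m - 1) choose Suc l)"
    unfolding of_nat_mult[symmetric] using binomial_absorb_comp[of m "Suc l"] k
    by (simp add: mult.commute)
  finally show "((\<lambda>p. bin_pf m p (Suc l)) has_real_derivative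
      real m * real ((m - 1) choose l) * p ^ l * (1 - p) ^ (m - 1 - l)
    - real m * real ((m - 1) choose Suc l) * p ^ Suc l * (1 - p) ^ (m - 1 - Suc l)) (at p)"
    unfolding f e by (rule DERIV_cong[OF DERIV_cmult[OF monomial]])
qed

lemma DERIV_nb_pf_sum:
  assumes "0 < g" "p < 1"
  shows "((\<lambda>p. \<Sum>l\<le>x. nb_pf g p l) has_real_derivative
    - (Gamma (real x + 1 + g) / (Gamma g * fact x) * p ^ x * (1 - p) powr (g - 1))) (at p)"
proof (rule DERIV_sum_atMost_telescope)
  have monomial: "((\<lambda>p. p ^ n * (1 - p) powr g) has_real_derivative
      real n * p ^ (n - 1) * (1 - p) powr g - g * p ^ n * (1 - p) powr (g - 1)) (at p)" for n
    using assms by (auto intro!: derivative_eq_intros simp: algebra_simps)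
  have Gamma_Suc: "Gamma (real l + 1 + g) = (real l + g) * Gamma (real l + g)" for l
  proof -
    have "real l + g \<notin> \<int>\<^sub>\<le>\<^sub>0" using assms nonpos_Ints_nonpos by fastforce
    from Gamma_plus1[OF this] show ?thesis by (simp add: algebra_simps)
  qed
  have Gamma_g: "Gamma g \<noteq> 0"
    using assms by (auto simp: Gamma_eq_zero_iff)
  from monomial[of 0] Gamma_Suc[of 0] Gamma_g
  show "((\<lambda>p. nb_pf g p 0) has_real_derivative
      - (Gamma (real 0 + 1 + g) / (Gamma g * fact 0) * p ^ 0 * (1 - p) powr (g - 1))) (at p)"
    by (simp add: nb_pf_def)
  fix l
  define c where "c = Gamma (real l + 1 + g) / (Gamma g * fact (Suc l))"
  have f: "(\<lambda>p. nb_pf g p (Suc l)) = (\<lambda>p. c * (p ^ Suc l * (1 - p) powr g))"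
    by (simp add: nb_pf_def c_def fun_eq_iff algebra_simps)
  have pw: "(1 - p) powr g = (1 - p) * (1 - p) powr (g - 1)"
    using assms by (simp add: powr_diff powr_one field_simps)
  have "c * (real (Suc l) * p ^ (Suc l - 1) * (1 - p) powr g - g * p ^ Suc l * (1 - p) powr (g - 1)) =
      (c * real (Suc l)) * p ^ l * (1 - p) powr (g - 1)
    - (c * (real (Suc l) + g)) * p ^ Suc l * (1 - p) powr (g - 1)"
    unfolding pw by (simp add: algebra_simps)
  also have "c * real (Suc l) = Gamma (real l + 1 + g) / (Gamma g * fact l)"
    unfolding c_def fact_Suc by simp
  also have "c * (real (Suc l) + g) = Gamma (real (Suc l) + 1 + g) / (Gamma g * fact (Suc l))"
    unfolding c_def using Gamma_Suc[of "Suc l"] by (simp add: add_ac)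
  finally show "((\<lambda>p. nb_pf g p (Suc l)) has_real_derivative
      Gamma (real l + 1 + g) / (Gamma g * fact l) * p ^ l * (1 - p) powr (g - 1)
    - Gamma (real (Suc l) + 1 + g) / (Gamma g * fact (Suc l)) * p ^ Suc l * (1 - p) powr (g - 1)) (at p)"
    unfolding f by (rule DERIV_cong[OF DERIV_cmult[OF monomial[of "Suc l"]]])
qed

lemma set_integral_Iic_eq_diff:
  fixes S d f :: "real \<Rightarrow> real"
  assumes "0 < p"
    and deriv: "\<And>t. 0 \<le> t \<Longrightarrow> t \<le> p \<Longrightarrow> (S has_real_derivative - d t) (at t)"
    and "continuous_on {0..p} d"
    and f: "\<And>t. t \<le> 0 \<Longrightarrow> f t = 0" "\<And>t. 0 < t \<Longrightarrow> t \<le> p \<Longrightarrow> f t = d t"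
  shows "(LINT t:{..p}|lborel. f t) = S 0 - S p"
proof -
  have "(LINT t:{..p}|lborel. f t) = (LINT t:{0<..p}|lborel. d t)"
    unfolding set_lebesgue_integral_def
    by (intro Bochner_Integration.integral_cong refl) (auto simp: indicator_def f)
  also have "\<dots> = (LBINT t=ereal 0..ereal p. d t)"
    using interval_integral_Ioc[of 0 p d] assms(1) by simp
  also have "\<dots> = (- S p) - (- S 0)"
  proof (rule interval_integral_FTC_finite)
    fix t assume "min 0 p \<le> t" "t \<le> max 0 p"
    then have "((\<lambda>t. - S t) has_real_derivative - (- d t)) (at t)"
      using assms(1) by (intro DERIV_minus deriv) auto
    then show "((\<lambda>t. - S t) has_vector_derivative d t) (at t within {min 0 p..max 0 p})"
      by (simp add: has_real_derivative_iff_has_vector_derivative[symmetric] has_field_derivative_at_within)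
  qed (use assms(1,3) in simp)
  finally show ?thesis by simp
qed

lemma beta_cdf_eq_bin_pf_sum:
  assumes "x < m" "0 < p" "p < 1"
  shows "beta_cdf (real x + 1) (real m - real x) p = 1 - (\<Sum>l\<le>x. bin_pf m p l)"
proof -
  have "beta_cdf (real x + 1) (real m - real x) p = (\<Sum>l\<le>x. bin_pf m 0 l) - (\<Sum>l\<le>x. bin_pf m p l)"
    unfolding beta_cdf_def
  proof (rule set_integral_Iic_eq_diff[OF \<open>0 < p\<close> DERIV_bin_pf_sum[OF \<open>x < m\<close>]])
    fix t :: real assume t: "0 < t" "t \<le> p"
    have B: "Beta (real x + 1) (real m - real x) = fact x * fact (m - 1 - x) / fact m"
      using Gamma_fact[where 'a = real, of x] Gamma_fact[where 'a = real, of "m - 1 - x"]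
        Gamma_fact[where 'a = real, of m] assms(1)
      by (simp add: Beta_def of_nat_diff add.commute)
    have C: "real m * real ((m - 1) choose x) = fact m / (fact x * fact (m - 1 - x))"
      using assms(1) by (cases m) (auto simp: binomial_fact fact_Suc field_simps)
    have "(1 - t) powr (real m - real x - 1) = (1 - t) ^ (m - 1 - x)"
      using t assms by (simp add: of_nat_diff powr_realpow [symmetric] algebra_simps)
    then have "beta_density (real x + 1) (real m - real x) t =
        t ^ x * (1 - t) ^ (m - 1 - x) / Beta (real x + 1) (real m - real x)"
      using t assms by (simp add: beta_density_def powr_realpow)
    then show "beta_density (real x + 1) (real m - real x) t =
        real m * real ((m - 1) choose x) * t ^ x * (1 - t) ^ (m - 1 - x)"
      unfolding B C by (simp add: field_simps)
  qed (auto simp: beta_density_def intro!: continuous_intros)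
  also have "(\<Sum>l\<le>x. bin_pf m 0 l) = 1"
    by (induction x) (auto simp: bin_pf_def)
  finally show ?thesis .
qed

lemma gamma_cdf_eq_poi_pf_sum:
  assumes "0 < r"
  shows "gamma_cdf (real x + 1) 1 r = 1 - (\<Sum>l\<le>x. poi_pf r l)"
proof -
  have "gamma_cdf (real x + 1) 1 r = (\<Sum>l\<le>x. poi_pf 0 l) - (\<Sum>l\<le>x. poi_pf r l)"
    unfolding gamma_cdf_def
  proof (rule set_integral_Iic_eq_diff[OF assms DERIV_poi_pf_sum])
    fix t :: real assume "0 < t"
    then show "gamma_density (real x + 1) 1 t = poi_pf t x"
      using Gamma_fact[where 'a = real, of x] by (simp add: gamma_density_def poi_pf_def powr_realpow add.commute)
  qed (auto simp: gamma_density_def poi_pf_def intro!: continuous_intros)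
  also have "(\<Sum>l\<le>x. poi_pf 0 l) = 1"
    by (induction x) (auto simp: poi_pf_def)
  finally show ?thesis .
qed

lemma beta_cdf_eq_nb_pf_sum:
  assumes "0 < g" "0 < p" "p < 1"
  shows "beta_cdf (real x + 1) g p = 1 - (\<Sum>l\<le>x. nb_pf g p l)"
proof -
  have Gamma_pos: "0 < Gamma g" "0 < Gamma (real x + 1 + g)"
    using assms by (auto intro!: Gamma_real_pos)
  have "beta_cdf (real x + 1) g p = (\<Sum>l\<le>x. nb_pf g 0 l) - (\<Sum>l\<le>x. nb_pf g p l)"
    unfolding beta_cdf_def
  proof (rule set_integral_Iic_eq_diff[OF \<open>0 < p\<close> DERIV_nb_pf_sum[OF \<open>0 < g\<close>]])
    show "continuous_on {0..p} (\<lambda>t. Gamma (real x + 1 + g) / (Gamma g * fact x) * t ^ x * (1 - t) powr (g - 1))"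
      using assms by (intro continuous_intros) auto
    fix t :: real
    show "t \<le> 0 \<Longrightarrow> beta_density (real x + 1) g t = 0"
      by (simp add: beta_density_def)
    show "t \<le> p \<Longrightarrow> t < 1" using assms by simp
    assume "0 < t" "t \<le> p"
    then show "beta_density (real x + 1) g t =
        Gamma (real x + 1 + g) / (Gamma g * fact x) * t ^ x * (1 - t) powr (g - 1)"
      using Gamma_fact[where 'a = real, of x] Gamma_pos assms
      by (simp add: beta_density_def Beta_def powr_realpow field_simps add.commute)
  qed
  also have "(\<Sum>l\<le>x. nb_pf g 0 l) = 1"
    using Gamma_pos by (induction x) (auto simp: nb_pf_def)
  finally show ?thesis .
qed

lemma beta_cdf_nonpos: "p \<le> 0 \<Longrightarrow> beta_cdf a b p = 0"
  unfolding beta_cdf_def set_lebesgue_integral_def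
  by (subst Bochner_Integration.integral_cong[where g = "\<lambda>_. 0"]) (auto simp: indicator_def beta_density_def)

lemma gamma_cdf_nonpos: "r \<le> 0 \<Longrightarrow> gamma_cdf g c r = 0"
  unfolding gamma_cdf_def set_lebesgue_integral_def
  by (subst Bochner_Integration.integral_cong[where g = "\<lambda>_. 0"]) (auto simp: indicator_def gamma_density_def)

lemma quantile_of_decreasing_tail:
  fixes S G :: "real \<Rightarrow> real" and V :: "real set" and F :: "real filter"
  assumes V_pos: "V \<subseteq> {0<..}"
    and V_down: "\<And>x y. x \<in> V \<Longrightarrow> 0 < y \<Longrightarrow> y \<le> x \<Longrightarrow> y \<in> V"
    and cont: "continuous_on (insert 0 V) S"
    and dec: "\<And>x y. x \<in> insert 0 V \<Longrightarrow> y \<in> insert 0 V \<Longrightarrow> x < y \<Longrightarrow> S y < S x"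
    and S0: "S 0 = 1" and lim: "(S \<longlongrightarrow> 0) F" "F \<noteq> bot" "\<forall>\<^sub>F t in F. t \<in> V"
    and G_nonpos: "\<And>x. x \<le> 0 \<Longrightarrow> G x = 0" and G_V: "\<And>x. x \<in> V \<Longrightarrow> G x = 1 - S x"
    and c: "0 < c" "c < 1"
  shows "\<exists>q\<in>V. Inf {x. 1 - c \<le> G x} = q
    \<and> (\<forall>x\<in>V. S x \<le> c \<longleftrightarrow> q \<le> x) \<and> (\<forall>x\<in>V. c \<le> S x \<longleftrightarrow> x \<le> q)"
proof -
  have "\<forall>\<^sub>F t in F. S t < c \<and> t \<in> V"
    using order_tendstoD(2)[OF lim(1) c(1)] lim(3) by (rule eventually_conj)
  then obtain b where b: "b \<in> V" "S b < c"
    using eventually_happens lim(2) by auto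
  have "{0..b} \<subseteq> insert 0 V"
  proof
    fix y assume "y \<in> {0..b}"
    then show "y \<in> insert 0 V" using V_down[OF b(1), of y] by (cases "y = 0") auto
  qed
  moreover have "0 \<le> b" using b V_pos by auto
  ultimately have "\<exists>q. 0 \<le> q \<and> q \<le> b \<and> S q = c"
    using b c S0 by (intro IVT2' continuous_on_subset[OF cont]) auto
  then obtain q where q: "0 \<le> q" "q \<le> b" "S q = c" by blast
  have qV: "q \<in> V"
    using q S0 c V_down[OF b(1), of q] by (cases "q = 0") auto
  have S_le_iff: "S x \<le> S y \<longleftrightarrow> y \<le> x" if "x \<in> insert 0 V" "y \<in> insert 0 V" for x y
    using dec[OF that] dec[OF that(2,1)] by (cases x y rule: linorder_cases) auto
  have le_c: "S x \<le> c \<longleftrightarrow> q \<le> x" and ge_c: "c \<le> S x \<longleftrightarrow> x \<le> q" if "x \<in> V" for x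
    using S_le_iff[of x q] S_le_iff[of q x] that qV q(3) by auto
  have Inf_eq: "Inf {x. 1 - c \<le> G x} = q"
  proof (rule cInf_eq_minimum)
    show "q \<in> {x. 1 - c \<le> G x}" using G_V[OF qV] q(3) by simp
    fix x assume x: "x \<in> {x. 1 - c \<le> G x}"
    show "q \<le> x"
    proof (rule ccontr)
      assume "\<not> q \<le> x"
      show False
      proof (cases "x \<le> 0")
        case True then show False using x G_nonpos c by simp
      next
        case False
        then have "x \<in> V" using V_down[OF qV, of x] \<open>\<not> q \<le> x\<close> by simp
        then show False using x G_V le_c \<open>\<not> q \<le> x\<close> by simp
      qed
    qed
  qed
  show ?thesis using qV Inf_eq le_c ge_c by blast
qed

lemma bin_pf_sum_strict_antimono:
  assumes "x < m" "0 \<le> s" "s < t" "t \<le> 1"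
  shows "(\<Sum>l\<le>x. bin_pf m t l) < (\<Sum>l\<le>x. bin_pf m s l)"
proof (rule DERIV_neg_imp_decreasing_open[OF \<open>s < t\<close>])
  fix u assume "s < u" "u < t"
  then show "\<exists>y. ((\<lambda>p. \<Sum>l\<le>x. bin_pf m p l) has_real_derivative y) (at u) \<and> y < 0"
    using assms DERIV_bin_pf_sum[OF assms(1), of u] by (intro exI conjI) auto
qed (unfold bin_pf_def, intro continuous_intros)

lemma poi_pf_sum_strict_antimono:
  assumes "0 \<le> s" "s < t"
  shows "(\<Sum>l\<le>x. poi_pf t l) < (\<Sum>l\<le>x. poi_pf s l)"
proof (rule DERIV_neg_imp_decreasing_open[OF \<open>s < t\<close>])
  fix u assume "s < u" "u < t"
  then show "\<exists>y. ((\<lambda>r. \<Sum>l\<le>x. poi_pf r l) has_real_derivative y) (at u) \<and> y < 0"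
    using assms DERIV_poi_pf_sum[of x u] by (intro exI conjI) (auto simp: poi_pf_def)
qed (auto simp: poi_pf_def intro!: continuous_intros)

lemma nb_pf_sum_strict_antimono:
  assumes "0 < g" "0 \<le> s" "s < t" "t < 1"
  shows "(\<Sum>l\<le>x. nb_pf g t l) < (\<Sum>l\<le>x. nb_pf g s l)"
proof -
  have Gamma_pos: "0 < Gamma g" "0 < Gamma (real x + 1 + g)"
    using assms by (auto intro!: Gamma_real_pos)
  then have "Gamma g \<noteq> 0" by simp
  show ?thesis
  proof (rule DERIV_neg_imp_decreasing_open[OF \<open>s < t\<close>])
    fix u assume "s < u" "u < t"
    then show "\<exists>y. ((\<lambda>p. \<Sum>l\<le>x. nb_pf g p l) has_real_derivative y) (at u) \<and> y < 0"
      using assms Gamma_pos DERIV_nb_pf_sum[OF assms(1), of u x] by (intro exI conjI) auto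
  qed (use assms \<open>Gamma g \<noteq> 0\<close> in \<open>auto simp: nb_pf_def intro!: continuous_intros\<close>)
qed

lemma bin_pf_sum_quantile:
  assumes "x < m" "0 < c" "c < 1"
  shows "\<exists>q\<in>{0<..<1}. q_B (1 - c) (real x + 1) (real m - real x) = q
    \<and> (\<forall>t\<in>{0<..<1}. (\<Sum>l\<le>x. bin_pf m t l) \<le> c \<longleftrightarrow> q \<le> t)
    \<and> (\<forall>t\<in>{0<..<1}. c \<le> (\<Sum>l\<le>x. bin_pf m t l) \<longleftrightarrow> t \<le> q)"
proof -
  let ?S = "\<lambda>t. \<Sum>l\<le>x. bin_pf m t l"
  have cont: "continuous_on A ?S" for A
    unfolding bin_pf_def by (intro continuous_intros)
  have dec: "?S t < ?S s" if "0 \<le> s" "s < t" "t < 1" for s t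
    using bin_pf_sum_strict_antimono[OF assms(1)] that by simp
  have "?S 1 = 0"
    using assms(1) by (intro sum.neutral) (auto simp: bin_pf_def)
  moreover have "isCont ?S 1"
    unfolding bin_pf_def by (intro continuous_intros)
  ultimately have lim: "(?S \<longlongrightarrow> 0) (at_left 1)"
    by (simp add: isCont_def filterlim_at_split)
  show ?thesis
    unfolding q_B_def
  proof (rule quantile_of_decreasing_tail[where F = "at_left 1"
        and G = "beta_cdf (real x + 1) (real m - real x)", OF _ _ cont _ _ lim])
    show "?S 0 = 1" by (induction x) (auto simp: bin_pf_def)
  qed (use assms dec eventually_at_left_real[of 0 "1::real"] in
      \<open>auto simp: beta_cdf_nonpos beta_cdf_eq_bin_pf_sum\<close>)
qed

lemma poi_pf_sum_quantile:
  assumes "0 < c" "c < 1"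
  shows "\<exists>q\<in>{0<..}. q_Gamma (1 - c) (real x + 1) 1 = q
    \<and> (\<forall>t\<in>{0<..}. (\<Sum>l\<le>x. poi_pf t l) \<le> c \<longleftrightarrow> q \<le> t)
    \<and> (\<forall>t\<in>{0<..}. c \<le> (\<Sum>l\<le>x. poi_pf t l) \<longleftrightarrow> t \<le> q)"
proof -
  let ?S = "\<lambda>t. \<Sum>l\<le>x. poi_pf t l"
  have cont: "continuous_on A ?S" for A
    unfolding poi_pf_def by (intro continuous_intros) auto
  have dec: "?S t < ?S s" if "0 \<le> s" "s < t" for s t
    using poi_pf_sum_strict_antimono that by simp
  have lim: "(?S \<longlongrightarrow> 0) at_top"
  proof (rule tendsto_null_sum)
    fix l
    have "((\<lambda>r::real. r ^ l / exp r / fact l) \<longlongrightarrow> 0) at_top"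
      by (intro tendsto_divide_zero tendsto_power_div_exp_0)
    then show "((\<lambda>r. poi_pf r l) \<longlongrightarrow> 0) at_top"
      by (simp add: poi_pf_def exp_minus field_simps)
  qed
  show ?thesis
    unfolding q_Gamma_def
  proof (rule quantile_of_decreasing_tail[where F = at_top and G = "gamma_cdf (real x + 1) 1",
        OF _ _ cont _ _ lim])
    show "?S 0 = 1" by (induction x) (auto simp: poi_pf_def)
  qed (use assms dec in \<open>auto simp: gamma_cdf_nonpos gamma_cdf_eq_poi_pf_sum eventually_gt_at_top\<close>)
qed

lemma nb_pf_sum_quantile:
  assumes "0 < g" "0 < c" "c < 1"
  shows "\<exists>q\<in>{0<..<1}. q_B (1 - c) (real x + 1) g = q
    \<and> (\<forall>t\<in>{0<..<1}. (\<Sum>l\<le>x. nb_pf g t l) \<le> c \<longleftrightarrow> q \<le> t)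
    \<and> (\<forall>t\<in>{0<..<1}. c \<le> (\<Sum>l\<le>x. nb_pf g t l) \<longleftrightarrow> t \<le> q)"
proof -
  let ?S = "\<lambda>t. \<Sum>l\<le>x. nb_pf g t l"
  have Gamma_pos: "0 < Gamma g" "0 < Gamma (real x + 1 + g)"
    using assms by (auto intro!: Gamma_real_pos)
  have cont: "continuous_on A ?S" if "A \<subseteq> {..<1}" for A
    using that unfolding nb_pf_def by (intro continuous_intros) auto
  have dec: "?S t < ?S s" if "0 \<le> s" "s < t" "t < 1" for s t
    using nb_pf_sum_strict_antimono[OF assms(1)] that by simp
  have lim: "(?S \<longlongrightarrow> 0) (at_left 1)"
  proof (rule tendsto_null_sum)
    fix l
    have "((\<lambda>p. (1 - p) powr g) \<longlongrightarrow> 0) (at_left (1::real))"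
      using assms(1) by (intro tendsto_zero_powrI tendsto_eq_intros)
        (auto simp: eventually_at_left_real intro!: eventually_mono[OF eventually_at_left_real[of 0 1]])
    then have "((\<lambda>p. Gamma (real l + g) / (Gamma g * fact l) * p ^ l * (1 - p) powr g) \<longlongrightarrow>
        Gamma (real l + g) / (Gamma g * fact l) * 1 ^ l * 0) (at_left (1::real))"
      by (intro tendsto_mult tendsto_const tendsto_power tendsto_ident_at)
    then show "((\<lambda>p. nb_pf g p l) \<longlongrightarrow> 0) (at_left 1)"
      by (simp add: nb_pf_def)
  qed
  show ?thesis
    unfolding q_B_def
  proof (rule quantile_of_decreasing_tail[where F = "at_left 1" and G = "beta_cdf (real x + 1) g",
        OF _ _ cont _ _ lim])
    show "?S 0 = 1" using Gamma_pos by (induction x) (auto simp: nb_pf_def)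
  qed (use assms dec eventually_at_left_real[of 0 "1::real"] in
      \<open>auto simp: beta_cdf_nonpos beta_cdf_eq_nb_pf_sum\<close>)
qed

section \<open>Closed forms of the bounds\<close>

lemma edf_cdf_at_lattice:
  assumes "0 < phi" "0 < V"
  shows "edf_cdf fam phi V mu (phi * real X / V) = (\<Sum>l\<le>X. fam phi V mu l)"
proof -
  have "phi * real l / V \<le> phi * real X / V \<longleftrightarrow> l \<le> X" for l
    using assms by (simp add: divide_le_cancel mult_le_cancel_left_pos)
  then show ?thesis
    unfolding edf_cdf_def by (subst suminf_finite[of "{..X}"]) auto
qed

lemma edf_cdf_strict_at_lattice:
  assumes "0 < phi" "0 < V"
  shows "edf_cdf_strict fam phi V mu (phi * real X / V) = (\<Sum>l<X. fam phi V mu l)"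
proof -
  have "phi * real l / V < phi * real X / V \<longleftrightarrow> l < X" for l
    using assms by (simp add: divide_less_cancel mult_less_cancel_left_pos)
  then show ?thesis
    unfolding edf_cdf_strict_def by (subst suminf_finite[of "{..<X}"]) auto
qed

lemma l_delta_eq_threshold:
  assumes "a \<in> Theta" "\<And>mu. mu \<in> Theta \<Longrightarrow> edf_cdf_strict fam phi V mu y \<le> 1 - delta \<longleftrightarrow> a \<le> mu"
  shows "l_delta fam Theta delta y V phi = ereal a"
proof -
  have "{mu \<in> Theta. edf_cdf_strict fam phi V mu y \<le> 1 - delta} = {mu \<in> Theta. a \<le> mu}"
    using assms(2) by blast
  then show ?thesis
    unfolding l_delta_def Let_def using assms(1) by (auto intro!: cInf_eq_minimum)
qed

lemma u_delta_eq_threshold: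
  assumes "a \<in> Theta" "\<And>mu. mu \<in> Theta \<Longrightarrow> delta \<le> edf_cdf fam phi V mu y \<longleftrightarrow> mu \<le> a"
  shows "u_delta fam Theta delta y V phi = ereal a"
proof -
  have "{mu \<in> Theta. delta \<le> edf_cdf fam phi V mu y} = {mu \<in> Theta. mu \<le> a}"
    using assms(2) by blast
  then show ?thesis
    unfolding u_delta_def Let_def using assms(1) by (auto intro!: cSup_eq_maximum)
qed

lemma l_delta_eq_Inf:
  assumes "Theta \<noteq> {}" "\<And>mu. mu \<in> Theta \<Longrightarrow> edf_cdf_strict fam phi V mu y \<le> 1 - delta"
  shows "l_delta fam Theta delta y V phi = Inf (ereal ` Theta)"
  unfolding l_delta_def Let_def using assms by (simp add: Collect_conj_eq Int_absorb2 subsetI)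

lemma u_delta_eq_Sup:
  assumes "Theta \<noteq> {}" "\<And>mu. mu \<in> Theta \<Longrightarrow> delta \<le> edf_cdf fam phi V mu y"
  shows "u_delta fam Theta delta y V phi = Sup (ereal ` Theta)"
  unfolding u_delta_def Let_def using assms by (simp add: Collect_conj_eq Int_absorb2 subsetI)

lemma Inf_ereal_greaterThan_0: "Inf (ereal ` {0<..}) = 0"
  using ereal_Inf'[of "{0<..} :: real set"] by (simp add: zero_ereal_def)

lemma Inf_ereal_unit_interval: "Inf (ereal ` {0<..<1}) = 0"
  using ereal_Inf'[of "{0<..<1} :: real set"] by (simp add: zero_ereal_def)

lemma Sup_ereal_unit_interval: "Sup (ereal ` {0<..<1}) = 1"
proof -
  have "Sup (ereal ` {0<..<1}) \<le> 1" by (rule Sup_least) auto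
  moreover have "ereal (1/2) \<le> Sup (ereal ` {0<..<1})" by (rule Sup_upper) auto
  ultimately have "\<bar>Sup (ereal ` {0<..<1})\<bar> \<noteq> \<infinity>"
    by (cases "Sup (ereal ` {0<..<1})") auto
  from ereal_Sup[OF this] show ?thesis
    by (simp add: one_ereal_def)
qed

lemma bin_pf_sum_all: "(\<Sum>l\<le>m. bin_pf m p l) = 1"
  using binomial_ring[of p "1 - p" m] by (simp add: bin_pf_def mult.assoc)

lemma binomial_l_delta_eq:
  assumes phi: "0 < phi" and V: "0 < V" "V / phi = real m" and X: "X \<le> m"
    and y: "y = phi * real X / V" and delta: "0 < delta" "delta < 1"
  shows "l_delta bin_fam {0<..<1} delta y V phi =
      ereal (q_B delta (V * y / phi) (1 + V / phi - V * y / phi) * of_bool (y > 0))"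
proof -
  have strict: "edf_cdf_strict bin_fam phi V mu y = (\<Sum>l<X. bin_pf m mu l)" for mu
    unfolding y edf_cdf_strict_at_lattice[OF phi V(1)] by (simp add: bin_fam_def V(2))
  show ?thesis
  proof (cases X)
    case 0
    have "l_delta bin_fam {0<..<1} delta y V phi = Inf (ereal ` {0<..<1})"
      by (rule l_delta_eq_Inf) (use delta in \<open>auto simp: strict 0\<close>)
    then show ?thesis
      using y 0 by (simp add: Inf_ereal_unit_interval)
  next
    case (Suc x)
    obtain q where q: "q \<in> {0<..<1}" "q_B (1 - (1 - delta)) (real x + 1) (real m - real x) = q"
      "\<And>t. t \<in> {0<..<1} \<Longrightarrow> (\<Sum>l\<le>x. bin_pf m t l) \<le> 1 - delta \<longleftrightarrow> q \<le> t"
      using bin_pf_sum_quantile[of x m "1 - delta"] Suc X delta by auto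
    have "l_delta bin_fam {0<..<1} delta y V phi = ereal q"
      by (rule l_delta_eq_threshold) (use q in \<open>auto simp: strict Suc lessThan_Suc_atMost\<close>)
    moreover have "V * y / phi = real X" "y > 0"
      using y Suc phi V by simp_all
    ultimately show ?thesis
      using q(2) Suc V(2) by (simp add: algebra_simps)
  qed
qed

lemma binomial_u_delta_eq:
  assumes phi: "0 < phi" and V: "0 < V" "V / phi = real m" and X: "X \<le> m"
    and y: "y = phi * real X / V" and delta: "0 < delta" "delta < 1"
  shows "u_delta bin_fam {0<..<1} delta y V phi =
      ereal (q_B (1 - delta) (1 + V * y / phi) (V / phi - V * y / phi) * of_bool (y < 1)
        + of_bool (y = 1))"
proof -
  have cdf: "edf_cdf bin_fam phi V mu y = (\<Sum>l\<le>X. bin_pf m mu l)" for mu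
    unfolding y edf_cdf_at_lattice[OF phi V(1)] by (simp add: bin_fam_def V(2))
  have Vy: "V * y / phi = real X" and m: "0 < real m"
    using y phi V divide_pos_pos[OF V(1) phi] by simp_all
  have "V / phi * y = real X"
    using Vy by simp
  then have my: "real m * y = real X"
    using V(2) by simp
  show ?thesis
  proof (cases "X = m")
    case True
    then have "y = 1"
      using my m by simp
    have "u_delta bin_fam {0<..<1} delta y V phi = Sup (ereal ` {0<..<1})"
      by (rule u_delta_eq_Sup) (use delta in \<open>auto simp: cdf True bin_pf_sum_all\<close>)
    then show ?thesis
      using \<open>y = 1\<close> by (simp add: Sup_ereal_unit_interval)
  next
    case False
    obtain q where q: "q \<in> {0<..<1}" "q_B (1 - delta) (real X + 1) (real m - real X) = q"
      "\<And>t. t \<in> {0<..<1} \<Longrightarrow> delta \<le> (\<Sum>l\<le>X. bin_pf m t l) \<longleftrightarrow> t \<le> q"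
      using bin_pf_sum_quantile[of X m delta] False X delta by auto
    have "u_delta bin_fam {0<..<1} delta y V phi = ereal q"
      by (rule u_delta_eq_threshold) (use q in \<open>auto simp: cdf\<close>)
    moreover have "real m * y < real m * 1"
      using my X False by simp
    then have "y < 1"
      using m by (simp add: mult_less_cancel_left_pos)
    ultimately show ?thesis
      using q(2) Vy V(2) by (simp add: algebra_simps)
  qed
qed

lemma poisson_l_delta_eq:
  assumes phi: "0 < phi" and V: "0 < V"
    and y: "y = phi * real X / V" and delta: "0 < delta" "delta < 1"
  shows "l_delta poi_fam {0<..} delta y V phi =
      ereal (phi * q_Gamma delta (V * y / phi) 1 / V * of_bool (y > 0))"
proof -
  have strict: "edf_cdf_strict poi_fam phi V mu y = (\<Sum>l<X. poi_pf (mu * V / phi) l)" for mu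
    unfolding y edf_cdf_strict_at_lattice[OF phi V] by (simp add: poi_fam_def)
  show ?thesis
  proof (cases X)
    case 0
    have "l_delta poi_fam {0<..} delta y V phi = Inf (ereal ` {0<..})"
      by (rule l_delta_eq_Inf) (use delta in \<open>auto simp: strict 0\<close>)
    then show ?thesis
      using y 0 by (simp add: Inf_ereal_greaterThan_0)
  next
    case (Suc x)
    obtain q where q: "q \<in> {0<..}" "q_Gamma (1 - (1 - delta)) (real x + 1) 1 = q"
      "\<And>t. t \<in> {0<..} \<Longrightarrow> (\<Sum>l\<le>x. poi_pf t l) \<le> 1 - delta \<longleftrightarrow> q \<le> t"
      using poi_pf_sum_quantile[of "1 - delta" x] delta by auto
    have "q \<le> mu * V / phi \<longleftrightarrow> phi * q / V \<le> mu" for mu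
      using phi V by (simp add: field_simps)
    then have "l_delta poi_fam {0<..} delta y V phi = ereal (phi * q / V)"
      by (intro l_delta_eq_threshold) (use q phi V in \<open>auto simp: strict Suc lessThan_Suc_atMost\<close>)
    moreover have "V * y / phi = real X" "y > 0"
      using y Suc phi V by simp_all
    ultimately show ?thesis
      using q(2) Suc by (simp add: algebra_simps)
  qed
qed

lemma poisson_u_delta_eq:
  assumes phi: "0 < phi" and V: "0 < V"
    and y: "y = phi * real X / V" and delta: "0 < delta" "delta < 1"
  shows "u_delta poi_fam {0<..} delta y V phi =
      ereal (phi * q_Gamma (1 - delta) (1 + V * y / phi) 1 / V)"
proof -
  have cdf: "edf_cdf poi_fam phi V mu y = (\<Sum>l\<le>X. poi_pf (mu * V / phi) l)" for mu
    unfolding y edf_cdf_at_lattice[OF phi V] by (simp add: poi_fam_def)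
  obtain q where q: "q \<in> {0<..}" "q_Gamma (1 - delta) (real X + 1) 1 = q"
    "\<And>t. t \<in> {0<..} \<Longrightarrow> delta \<le> (\<Sum>l\<le>X. poi_pf t l) \<longleftrightarrow> t \<le> q"
    using poi_pf_sum_quantile[of delta X] delta by auto
  have "mu * V / phi \<le> q \<longleftrightarrow> mu \<le> phi * q / V" for mu
    using phi V by (simp add: field_simps)
  then have "u_delta poi_fam {0<..} delta y V phi = ereal (phi * q / V)"
    by (intro u_delta_eq_threshold) (use q phi V in \<open>auto simp: cdf\<close>)
  moreover have "V * y / phi = real X"
    using y phi V by simp
  ultimately show ?thesis
    using q(2) by (simp add: algebra_simps)
qed

lemma prob_of_odds_in_unit_interval: "0 < mu \<Longrightarrow> mu / (1 + mu) \<in> {0<..<1::real}"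
  by (simp add: divide_less_eq)

lemma le_prob_of_odds_iff:
  fixes mu q :: real
  assumes "0 < mu" "q < 1"
  shows "q \<le> mu / (1 + mu) \<longleftrightarrow> q / (1 - q) \<le> mu"
  using assms by (simp add: pos_le_divide_eq pos_divide_le_eq algebra_simps)

lemma prob_of_odds_le_iff:
  fixes mu q :: real
  assumes "0 < mu" "q < 1"
  shows "mu / (1 + mu) \<le> q \<longleftrightarrow> mu \<le> q / (1 - q)"
  using assms by (simp add: pos_le_divide_eq pos_divide_le_eq algebra_simps)

lemma negbin_l_delta_eq:
  assumes phi: "0 < phi" and V: "0 < V"
    and y: "y = phi * real X / V" and delta: "0 < delta" "delta < 1"
  shows "l_delta nb_fam {0<..} delta y V phi =
      ereal (q_B delta (V * y / phi) (V / phi) / (1 - q_B delta (V * y / phi) (V / phi))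
        * of_bool (y > 0))"
proof -
  have strict: "edf_cdf_strict nb_fam phi V mu y = (\<Sum>l<X. nb_pf (V / phi) (mu / (1 + mu)) l)" for mu
    unfolding y edf_cdf_strict_at_lattice[OF phi V] by (simp add: nb_fam_def)
  show ?thesis
  proof (cases X)
    case 0
    have "l_delta nb_fam {0<..} delta y V phi = Inf (ereal ` {0<..})"
      by (rule l_delta_eq_Inf) (use delta in \<open>auto simp: strict 0\<close>)
    then show ?thesis
      using y 0 by (simp add: Inf_ereal_greaterThan_0)
  next
    case (Suc x)
    obtain q where q: "q \<in> {0<..<1}" "q_B (1 - (1 - delta)) (real x + 1) (V / phi) = q"
      "\<And>t. t \<in> {0<..<1} \<Longrightarrow> (\<Sum>l\<le>x. nb_pf (V / phi) t l) \<le> 1 - delta \<longleftrightarrow> q \<le> t"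
      using nb_pf_sum_quantile[of "V / phi" "1 - delta" x] phi V delta by auto
    have "l_delta nb_fam {0<..} delta y V phi = ereal (q / (1 - q))"
      by (rule l_delta_eq_threshold) (use q prob_of_odds_in_unit_interval le_prob_of_odds_iff in
          \<open>auto simp: strict Suc lessThan_Suc_atMost\<close>)
    moreover have "V * y / phi = real X" "y > 0"
      using y Suc phi V by simp_all
    ultimately show ?thesis
      using q(2) Suc by (simp add: algebra_simps)
  qed
qed

lemma negbin_u_delta_eq:
  assumes phi: "0 < phi" and V: "0 < V"
    and y: "y = phi * real X / V" and delta: "0 < delta" "delta < 1"
  shows "u_delta nb_fam {0<..} delta y V phi =
      ereal (q_B (1 - delta) (1 + V * y / phi) (V / phi)
        / (1 - q_B (1 - delta) (1 + V * y / phi) (V / phi)))"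
proof -
  have cdf: "edf_cdf nb_fam phi V mu y = (\<Sum>l\<le>X. nb_pf (V / phi) (mu / (1 + mu)) l)" for mu
    unfolding y edf_cdf_at_lattice[OF phi V] by (simp add: nb_fam_def)
  obtain q where q: "q \<in> {0<..<1}" "q_B (1 - delta) (real X + 1) (V / phi) = q"
    "\<And>t. t \<in> {0<..<1} \<Longrightarrow> delta \<le> (\<Sum>l\<le>X. nb_pf (V / phi) t l) \<longleftrightarrow> t \<le> q"
    using nb_pf_sum_quantile[of "V / phi" delta X] phi V delta by auto
  have "u_delta nb_fam {0<..} delta y V phi = ereal (q / (1 - q))"
    by (rule u_delta_eq_threshold) (use q prob_of_odds_in_unit_interval prob_of_odds_le_iff in
        \<open>auto simp: cdf\<close>)
  moreover have "V * y / phi = real X"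
    using y phi V by simp
  ultimately show ?thesis
    using q(2) by (simp add: algebra_simps)
qed

section \<open>Convolution-closed count families\<close>

lemma bin_pf_conv:
  "(\<Sum>r\<le>s. bin_pf m1 p r * bin_pf m2 p (s - r)) = bin_pf (m1 + m2) p s"
proof -
  have summand: "bin_pf m1 p r * bin_pf m2 p (s - r) =
      real ((m1 choose r) * (m2 choose (s - r))) * (p ^ s * (1 - p) ^ (m1 + m2 - s))" if "r \<le> s" for r
  proof (cases "r \<le> m1 \<and> s - r \<le> m2")
    case True
    then have "m1 + m2 - s = (m1 - r) + (m2 - (s - r))"
      using that by auto
    then have "p ^ s = p ^ r * p ^ (s - r)" "(1 - p) ^ (m1 + m2 - s) = (1 - p) ^ (m1 - r) * (1 - p) ^ (m2 - (s - r))"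
      using that by (simp_all flip: power_add)
    then show ?thesis
      unfolding bin_pf_def by (simp add: mult_ac)
  next
    case False
    then show ?thesis
      by (auto simp: bin_pf_def)
  qed
  have "(\<Sum>r\<le>s. bin_pf m1 p r * bin_pf m2 p (s - r)) =
      real (\<Sum>r\<le>s. (m1 choose r) * (m2 choose (s - r))) * (p ^ s * (1 - p) ^ (m1 + m2 - s))"
    by (simp add: summand sum_distrib_right)
  then show ?thesis
    by (simp add: vandermonde bin_pf_def)
qed

lemma poi_pf_conv:
  "(\<Sum>r\<le>s. poi_pf a r * poi_pf b (s - r)) = poi_pf (a + b) s"
proof -
  have summand: "poi_pf a r * poi_pf b (s - r) = real (s choose r) * a ^ r * b ^ (s - r) * (exp (- (a + b)) / fact s)"
    if "r \<le> s" for r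
    using that by (simp add: poi_pf_def binomial_fact exp_add [symmetric] field_simps)
  have "(\<Sum>r\<le>s. poi_pf a r * poi_pf b (s - r)) = (a + b) ^ s * (exp (- (a + b)) / fact s)"
    by (simp add: summand binomial_ring sum_distrib_right sum_divide_distrib)
  then show ?thesis
    by (simp add: poi_pf_def)
qed

lemma nb_pf_conv:
  assumes "0 < g1" "0 < g2" "p < 1"
  shows "(\<Sum>r\<le>s. nb_pf g1 p r * nb_pf g2 p (s - r)) = nb_pf (g1 + g2) p s"
proof -
  have poch: "nb_pf g p l = pochhammer g l / fact l * p ^ l * (1 - p) powr g" if "0 < g" for g l
  proof -
    have "g \<notin> \<int>\<^sub>\<le>\<^sub>0" using that nonpos_Ints_nonpos by fastforce
    from pochhammer_Gamma[OF this, of l] show ?thesis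
      by (simp add: nb_pf_def add.commute)
  qed
  have summand: "nb_pf g1 p r * nb_pf g2 p (s - r) = real (s choose r) * pochhammer g1 r * pochhammer g2 (s - r)
      * (p ^ s * (1 - p) powr (g1 + g2) / fact s)" if "r \<le> s" for r
  proof -
    have "p ^ r * p ^ (s - r) = p ^ s"
      using that by (simp flip: power_add)
    then show ?thesis
      using that assms by (simp add: poch binomial_fact powr_add field_simps)
  qed
  have "(\<Sum>r\<le>s. nb_pf g1 p r * nb_pf g2 p (s - r))
      = pochhammer (g1 + g2) s * (p ^ s * (1 - p) powr (g1 + g2) / fact s)"
    by (simp add: summand pochhammer_binomial_sum sum_distrib_right sum_divide_distrib)
  then show ?thesis
    using assms by (simp add: poch)
qed

text \<open>\<open>admissible\<close> singles out the volumes for which \<open>fam phi V\<close> is a member of the family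
  (\<open>V / phi \<in> \<nat>\<close> for the binomial family).\<close>

locale count_family =
  fixes fam :: "real \<Rightarrow> real \<Rightarrow> real \<Rightarrow> nat \<Rightarrow> real" and phi :: real
    and Theta :: "real set" and admissible :: "real \<Rightarrow> bool"
  assumes admissible_add: "\<And>V W. admissible V \<Longrightarrow> admissible W \<Longrightarrow> admissible (V + W)"
    and fam_nonneg: "\<And>V mu l. admissible V \<Longrightarrow> mu \<in> Theta \<Longrightarrow> 0 \<le> fam phi V mu l"
    and fam_conv: "\<And>V W mu s. admissible V \<Longrightarrow> admissible W \<Longrightarrow> mu \<in> Theta \<Longrightarrow>
      (\<Sum>r\<le>s. fam phi V mu r * fam phi W mu (s - r)) = fam phi (V + W) mu s"
    and fam_cdf_antimono: "\<And>V mu mu' x. admissible V \<Longrightarrow> mu \<in> Theta \<Longrightarrow> mu' \<in> Theta \<Longrightarrow>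
      mu \<le> mu' \<Longrightarrow> (\<Sum>l\<le>x. fam phi V mu' l) \<le> (\<Sum>l\<le>x. fam phi V mu l)"

lemma bin_pf_sum_antimono:
  assumes "0 \<le> a" "a \<le> b" "b \<le> 1"
  shows "(\<Sum>l\<le>x. bin_pf m b l) \<le> (\<Sum>l\<le>x. bin_pf m a l)"
proof (cases "x < m")
  case True
  then show ?thesis
    using assms bin_pf_sum_strict_antimono[OF True, of a b] by (cases "a = b") auto
next
  case False
  then have "(\<Sum>l\<le>x. bin_pf m p l) = (\<Sum>l\<le>m. bin_pf m p l)" for p
    by (intro sum.mono_neutral_right) (auto simp: bin_pf_def)
  then show ?thesis
    by (simp add: bin_pf_sum_all)
qed

lemma count_family_binomial:
  assumes "0 < phi"
  shows "count_family bin_fam phi {0<..<1} (\<lambda>V. 0 < V \<and> V / phi \<in> \<nat>)"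
proof
  have fam: "bin_fam phi V = bin_pf m" if "V / phi = real m" for V m
    using that by (simp add: fun_eq_iff bin_fam_def)
  fix V W mu mu' :: real and l s x :: nat
  show "0 < V \<and> V / phi \<in> \<nat> \<Longrightarrow> 0 < W \<and> W / phi \<in> \<nat> \<Longrightarrow>
      0 < V + W \<and> (V + W) / phi \<in> \<nat>"
    by (simp add: add_divide_distrib)
  show "mu \<in> {0<..<1} \<Longrightarrow> 0 \<le> bin_fam phi V mu l"
    by (simp add: bin_fam_def bin_pf_def)
  assume V: "0 < V \<and> V / phi \<in> \<nat>"
  then obtain m where m: "V / phi = real m"
    by (auto elim: Nats_cases)
  show "mu \<in> {0<..<1} \<Longrightarrow> mu' \<in> {0<..<1} \<Longrightarrow> mu \<le> mu' \<Longrightarrow>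
      (\<Sum>l\<le>x. bin_fam phi V mu' l) \<le> (\<Sum>l\<le>x. bin_fam phi V mu l)"
    by (simp add: fam[OF m] bin_pf_sum_antimono)
  assume "0 < W \<and> W / phi \<in> \<nat>"
  then obtain m' where m': "W / phi = real m'"
    by (auto elim: Nats_cases)
  have mm': "(V + W) / phi = real (m + m')"
    using m m' by (simp add: add_divide_distrib)
  show "(\<Sum>r\<le>s. bin_fam phi V mu r * bin_fam phi W mu (s - r)) = bin_fam phi (V + W) mu s"
    unfolding fam[OF m] fam[OF m'] fam[OF mm'] by (rule bin_pf_conv)
qed

lemma count_family_poisson:
  assumes "0 < phi"
  shows "count_family poi_fam phi {0<..} (\<lambda>V. 0 < V)"
proof
  fix V W mu mu' :: real and l s x :: nat
  assume V: "0 < V"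
  show "mu \<in> {0<..} \<Longrightarrow> 0 \<le> poi_fam phi V mu l"
    using V assms by (simp add: poi_fam_def poi_pf_def)
  show "0 < W \<Longrightarrow> mu \<in> {0<..} \<Longrightarrow>
      (\<Sum>r\<le>s. poi_fam phi V mu r * poi_fam phi W mu (s - r)) = poi_fam phi (V + W) mu s"
    by (simp add: poi_fam_def poi_pf_conv distrib_left add_divide_distrib)
  assume "mu \<in> {0<..}" "mu' \<in> {0<..}" "mu \<le> mu'"
  then have "0 \<le> mu * V / phi" "mu * V / phi \<le> mu' * V / phi"
    using V assms by (auto intro!: divide_right_mono mult_right_mono)
  then show "(\<Sum>l\<le>x. poi_fam phi V mu' l) \<le> (\<Sum>l\<le>x. poi_fam phi V mu l)"
    using poi_pf_sum_strict_antimono[of "mu * V / phi" "mu' * V / phi" x]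
    by (cases "mu * V / phi = mu' * V / phi") (auto simp: poi_fam_def)
qed simp

lemma count_family_negbin:
  assumes "0 < phi"
  shows "count_family nb_fam phi {0<..} (\<lambda>V. 0 < V)"
proof
  note odds = prob_of_odds_in_unit_interval
  fix V W mu mu' :: real and l s x :: nat
  assume V: "0 < V"
  then have g: "0 < V / phi"
    using assms by simp
  show "mu \<in> {0<..} \<Longrightarrow> 0 \<le> nb_fam phi V mu l"
    using g odds[of mu] Gamma_real_pos[of "real l + V / phi"] Gamma_real_pos[OF g]
    by (simp add: nb_fam_def nb_pf_def)
  show "0 < W \<Longrightarrow> mu \<in> {0<..} \<Longrightarrow>
      (\<Sum>r\<le>s. nb_fam phi V mu r * nb_fam phi W mu (s - r)) = nb_fam phi (V + W) mu s"
    using g assms odds[of mu] nb_pf_conv[OF g, of "W / phi" "mu / (1 + mu)" s]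
    by (simp add: nb_fam_def add_divide_distrib)
  assume "mu \<in> {0<..}" "mu' \<in> {0<..}" "mu \<le> mu'"
  moreover from this have "mu / (1 + mu) \<le> mu' / (1 + mu')"
    by (simp add: frac_le divide_simps algebra_simps)
  ultimately show "(\<Sum>l\<le>x. nb_fam phi V mu' l) \<le> (\<Sum>l\<le>x. nb_fam phi V mu l)"
    using odds[of mu] odds[of mu'] nb_pf_sum_strict_antimono[OF g, of "mu / (1 + mu)" "mu' / (1 + mu')" x]
    by (cases "mu / (1 + mu) = mu' / (1 + mu')") (auto simp: nb_fam_def)
qed simp

lemma sum_atMost_triangle_swap:
  fixes x :: nat
  shows "(\<Sum>l\<le>x. \<Sum>r\<le>x - l. f l r) = (\<Sum>r\<le>x. \<Sum>l\<le>x - r. f l r)"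
proof -
  have "(\<Sum>l\<le>x. \<Sum>r\<le>x - l. f l r) = (\<Sum>l\<le>x. \<Sum>r | r \<le> x \<and> l + r \<le> x. f l r)"
    by (intro sum.cong) (auto intro!: sum.cong)
  also have "\<dots> = (\<Sum>r\<le>x. \<Sum>l | l \<le> x \<and> l + r \<le> x. f l r)"
    using sum.swap_restrict[of "{..x}" "{..x}" f "\<lambda>l r. l + r \<le> x"] by simp
  also have "\<dots> = (\<Sum>r\<le>x. \<Sum>l\<le>x - r. f l r)"
    by (intro sum.cong) (auto intro!: sum.cong)
  finally show ?thesis .
qed

lemma sum_atMost_convolution:
  fixes x :: nat
  shows "(\<Sum>s\<le>x. \<Sum>r\<le>s. f r (s - r)) = (\<Sum>r\<le>x. \<Sum>l\<le>x - r. f r l)"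
proof -
  have "(\<Sum>r\<le>x. \<Sum>l\<le>x - r. f r l) = (\<Sum>(r, l)\<in>(SIGMA r:{..x}. {..x - r}). f r l)"
    by (rule sum.Sigma) auto
  also have "(SIGMA r:{..x}. {..x - r}) = {(r, l). r + l \<le> x}"
    by auto
  finally show ?thesis
    by (simp add: sum.triangle_reindex_eq)
qed

lemma measurable_sum_count_space_nat:
  fixes N :: "'i \<Rightarrow> 'a \<Rightarrow> nat"
  assumes "\<And>i. i \<in> B \<Longrightarrow> N i \<in> M \<rightarrow>\<^sub>M count_space UNIV"
  shows "(\<lambda>\<omega>. \<Sum>i\<in>B. N i \<omega>) \<in> M \<rightarrow>\<^sub>M count_space UNIV"
  using assms unfolding measurable_cong_sets[OF refl sets_borel_eq_count_space, symmetric]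
  by (rule borel_measurable_sum)

lemma sets_Collect_count_space_nat:
  fixes f :: "'a \<Rightarrow> nat"
  assumes "f \<in> M \<rightarrow>\<^sub>M count_space UNIV"
  shows "{\<omega> \<in> space M. P (f \<omega>)} \<in> sets M"
  using measurable_sets[OF assms, of "{x. P x}"] by (simp add: vimage_def Int_def conj_commute)

lemma sets_Collect_determined_by_finite:
  fixes N :: "'i \<Rightarrow> 'a \<Rightarrow> nat"
  assumes "finite I" and N: "\<And>i. i \<in> I \<Longrightarrow> N i \<in> M \<rightarrow>\<^sub>M count_space UNIV"
    and P: "\<And>\<omega> \<omega>'. \<omega> \<in> space M \<Longrightarrow> \<omega>' \<in> space M \<Longrightarrow>
      (\<And>i. i \<in> I \<Longrightarrow> N i \<omega> = N i \<omega>') \<Longrightarrow> P \<omega> = P \<omega>'"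
  shows "{\<omega> \<in> space M. P \<omega>} \<in> sets M"
proof -
  define C where "C = (\<lambda>\<omega>. restrict (\<lambda>i. N i \<omega>) I) ` {\<omega> \<in> space M. P \<omega>}"
  have "countable C"
    using countable_PiE[OF \<open>finite I\<close>, of "\<lambda>_. UNIV :: nat set"]
    by (rule countable_subset[rotated]) (auto simp: C_def)
  moreover have "{\<omega> \<in> space M. P \<omega>} = (\<Union>c\<in>C. {\<omega> \<in> space M. \<forall>i\<in>I. N i \<omega> = c i})"
    using P by (auto simp: C_def)
  moreover have "{\<omega> \<in> space M. \<forall>i\<in>I. N i \<omega> = c i} \<in> sets M" for c
    using \<open>finite I\<close> N by (intro sets.sets_Collect_finite_All sets_Collect_count_space_nat) auto
  ultimately show ?thesis
    by (auto intro!: sets.countable_UN')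
qed

lemma sum_closed_nonempty:
  assumes "\<And>x y. P x \<Longrightarrow> P y \<Longrightarrow> P (x + y)" "finite A" "A \<noteq> {}" "\<And>i. i \<in> A \<Longrightarrow> P (f i)"
  shows "P (\<Sum>i\<in>A. f i)"
  using assms(2-4) by (induction A rule: finite_ne_induct) (auto intro: assms(1))

context prob_space
begin

lemma indep_var_sum:
  fixes N :: "'i \<Rightarrow> 'a \<Rightarrow> nat"
  assumes indep: "indep_vars (\<lambda>_. count_space UNIV) N I"
    and "a \<in> I" "B \<subseteq> I" "a \<notin> B" "finite B"
  shows "indep_var (count_space UNIV) (N a) (count_space UNIV) (\<lambda>\<omega>. \<Sum>i\<in>B. N i \<omega>)"
proof -
  have "indep_var (Pi\<^sub>M {a} (\<lambda>_. count_space UNIV)) (\<lambda>\<omega>. restrict (\<lambda>i. N i \<omega>) {a})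
      (Pi\<^sub>M B (\<lambda>_. count_space UNIV)) (\<lambda>\<omega>. restrict (\<lambda>i. N i \<omega>) B)"
    using assms by (intro indep_var_restrict[OF indep]) auto
  then have "indep_var (count_space UNIV) ((\<lambda>f. f a) \<circ> (\<lambda>\<omega>. restrict (\<lambda>i. N i \<omega>) {a}))
      (count_space UNIV) ((\<lambda>f. \<Sum>i\<in>B. f i) \<circ> (\<lambda>\<omega>. restrict (\<lambda>i. N i \<omega>) B))"
    by (rule indep_var_compose) (auto intro!: measurable_sum_count_space_nat measurable_component_singleton)
  moreover have "(\<lambda>\<omega>. \<Sum>i\<in>B. restrict (\<lambda>i. N i \<omega>) B i) = (\<lambda>\<omega>. \<Sum>i\<in>B. N i \<omega>)"
    by (auto intro!: sum.cong)
  ultimately show ?thesis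
    by (simp add: comp_def)
qed

lemma prob_le_eq_sum:
  fixes X :: "'a \<Rightarrow> nat"
  assumes X: "X \<in> M \<rightarrow>\<^sub>M count_space UNIV" and E: "\<And>l. {\<omega> \<in> space M. E l \<omega>} \<in> sets M"
  shows "prob {\<omega> \<in> space M. X \<omega> \<le> x \<and> E (X \<omega>) \<omega>} = (\<Sum>l\<le>x. prob {\<omega> \<in> space M. X \<omega> = l \<and> E l \<omega>})"
proof -
  have ev: "{\<omega> \<in> space M. X \<omega> = l \<and> E l \<omega>} \<in> events" for l
  proof -
    have "{\<omega> \<in> space M. X \<omega> = l \<and> E l \<omega>} = {\<omega> \<in> space M. X \<omega> = l} \<inter> {\<omega> \<in> space M. E l \<omega>}"
      by auto
    then show ?thesis
      using sets_Collect_count_space_nat[OF X] E by (simp add: sets.Int)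
  qed
  have "{\<omega> \<in> space M. X \<omega> \<le> x \<and> E (X \<omega>) \<omega>} = (\<Union>l\<le>x. {\<omega> \<in> space M. X \<omega> = l \<and> E l \<omega>})"
    by auto
  then have "{\<omega> \<in> space M. X \<omega> \<le> x \<and> E (X \<omega>) \<omega>} \<in> events"
    using ev by (simp add: sets.finite_UN)
  then show ?thesis
    using ev by (intro prob_sum AE_I2) auto
qed

lemma indep_sum_cdf_diff:
  fixes X Y :: "'a \<Rightarrow> nat" and p q :: "nat \<Rightarrow> real"
  assumes indep: "indep_var (count_space UNIV) X (count_space UNIV) Y"
  shows "prob {\<omega> \<in> space M. X \<omega> + Y \<omega> \<le> x} - (\<Sum>s\<le>x. \<Sum>r\<le>s. p r * q (s - r)) =
    (\<Sum>l\<le>x. prob {\<omega> \<in> space M. X \<omega> = l} * (prob {\<omega> \<in> space M. Y \<omega> \<le> x - l} - (\<Sum>r\<le>x - l. q r)))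
  + (\<Sum>l\<le>x. q l * (prob {\<omega> \<in> space M. X \<omega> \<le> x - l} - (\<Sum>r\<le>x - l. p r)))"
proof -
  have X: "X \<in> M \<rightarrow>\<^sub>M count_space UNIV" and Y: "Y \<in> M \<rightarrow>\<^sub>M count_space UNIV"
    using indep_var_rv1[OF indep] indep_var_rv2[OF indep] .
  have X_le: "prob {\<omega> \<in> space M. X \<omega> \<le> y} = (\<Sum>l\<le>y. prob {\<omega> \<in> space M. X \<omega> = l})" for y
    using prob_le_eq_sum[OF X, of "\<lambda>_ _. True" y] by simp
  have "prob {\<omega> \<in> space M. X \<omega> + Y \<omega> \<le> x} = prob {\<omega> \<in> space M. X \<omega> \<le> x \<and> Y \<omega> \<le> x - X \<omega>}"
    by (rule arg_cong[where f = prob]) auto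
  also have "\<dots> = (\<Sum>l\<le>x. prob {\<omega> \<in> space M. X \<omega> = l \<and> Y \<omega> \<le> x - l})"
    using Y by (intro prob_le_eq_sum[OF X] sets_Collect_count_space_nat)
  also have "\<dots> = (\<Sum>l\<le>x. prob {\<omega> \<in> space M. X \<omega> = l} * prob {\<omega> \<in> space M. Y \<omega> \<le> x - l})"
    using indep_varD[OF indep, of "{_}" "{.._}"] by (simp add: vimage_def Int_def conj_commute)
  finally have sum_law: "prob {\<omega> \<in> space M. X \<omega> + Y \<omega> \<le> x} =
      (\<Sum>l\<le>x. prob {\<omega> \<in> space M. X \<omega> = l} * prob {\<omega> \<in> space M. Y \<omega> \<le> x - l})" .
  have "(\<Sum>l\<le>x. prob {\<omega> \<in> space M. X \<omega> = l} * (\<Sum>r\<le>x - l. q r))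
      = (\<Sum>l\<le>x. \<Sum>r\<le>x - l. prob {\<omega> \<in> space M. X \<omega> = l} * q r)"
    by (simp add: sum_distrib_left)
  also have "\<dots> = (\<Sum>r\<le>x. \<Sum>l\<le>x - r. prob {\<omega> \<in> space M. X \<omega> = l} * q r)"
    by (rule sum_atMost_triangle_swap)
  also have "\<dots> = (\<Sum>r\<le>x. q r * prob {\<omega> \<in> space M. X \<omega> \<le> x - r})"
    by (simp add: X_le sum_distrib_left mult.commute)
  finally have swap: "(\<Sum>l\<le>x. prob {\<omega> \<in> space M. X \<omega> = l} * (\<Sum>r\<le>x - l. q r))
      = (\<Sum>r\<le>x. q r * prob {\<omega> \<in> space M. X \<omega> \<le> x - r})" .
  have conv: "(\<Sum>s\<le>x. \<Sum>r\<le>s. p r * q (s - r)) = (\<Sum>l\<le>x. q l * (\<Sum>r\<le>x - l. p r))"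
    unfolding sum_atMost_convolution[of "\<lambda>r l. p r * q l"]
    by (subst sum_atMost_triangle_swap) (simp add: sum_distrib_left mult.commute)
  show ?thesis
    unfolding sum_law conv right_diff_distrib sum_subtractf swap by simp
qed

text \<open>Taking \<open>\<sigma> = 1\<close> and \<open>\<sigma> = -1\<close> gives the two directions of the stochastic order.\<close>

lemma indep_sum_cdf_compare:
  fixes N :: "'i \<Rightarrow> 'a \<Rightarrow> nat" and Q :: "real \<Rightarrow> nat \<Rightarrow> real" and w :: "'i \<Rightarrow> real"
    and adm :: "real \<Rightarrow> bool" and \<sigma> :: real
  assumes indep: "indep_vars (\<lambda>_. count_space UNIV) N I"
    and adm_add: "\<And>V W. adm V \<Longrightarrow> adm W \<Longrightarrow> adm (V + W)"
    and Q_nonneg: "\<And>V l. adm V \<Longrightarrow> 0 \<le> Q V l"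
    and Q_conv: "\<And>V W s. adm V \<Longrightarrow> adm W \<Longrightarrow> (\<Sum>r\<le>s. Q V r * Q W (s - r)) = Q (V + W) s"
    and A: "finite A" "A \<noteq> {}" "A \<subseteq> I" and adm: "\<And>i. i \<in> A \<Longrightarrow> adm (w i)"
    and compare: "\<And>i x. i \<in> A \<Longrightarrow> 0 \<le> \<sigma> * (prob {\<omega> \<in> space M. N i \<omega> \<le> x} - (\<Sum>l\<le>x. Q (w i) l))"
  shows "0 \<le> \<sigma> * (prob {\<omega> \<in> space M. (\<Sum>i\<in>A. N i \<omega>) \<le> x} - (\<Sum>l\<le>x. Q (\<Sum>i\<in>A. w i) l))"
  using A adm compare
proof (induction A arbitrary: x rule: finite_ne_induct)
  case (insert a A)
  have adm_A: "adm (\<Sum>i\<in>A. w i)"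
    using insert.hyps insert.prems(2) by (intro sum_closed_nonempty[of adm] adm_add) auto
  have a: "adm (w a)"
    using insert.prems(2) by simp
  let ?p = "Q (w a)" and ?q = "Q (\<Sum>i\<in>A. w i)"
  have "\<sigma> * (prob {\<omega> \<in> space M. (\<Sum>i\<in>insert a A. N i \<omega>) \<le> x} - (\<Sum>s\<le>x. Q (\<Sum>i\<in>insert a A. w i) s))
    = \<sigma> * (prob {\<omega> \<in> space M. N a \<omega> + (\<Sum>i\<in>A. N i \<omega>) \<le> x} - (\<Sum>s\<le>x. \<Sum>r\<le>s. ?p r * ?q (s - r)))"
    using insert.hyps by (simp add: Q_conv[OF a adm_A])
  also have "\<dots> = \<sigma> * ((\<Sum>l\<le>x. prob {\<omega> \<in> space M. N a \<omega> = l} *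
        (prob {\<omega> \<in> space M. (\<Sum>i\<in>A. N i \<omega>) \<le> x - l} - (\<Sum>r\<le>x - l. ?q r)))
    + (\<Sum>l\<le>x. ?q l * (prob {\<omega> \<in> space M. N a \<omega> \<le> x - l} - (\<Sum>r\<le>x - l. ?p r))))"
    using insert.hyps insert.prems(1) by (subst indep_sum_cdf_diff[OF indep_var_sum[OF indep]]) auto
  also have "\<dots> = (\<Sum>l\<le>x. prob {\<omega> \<in> space M. N a \<omega> = l} *
        (\<sigma> * (prob {\<omega> \<in> space M. (\<Sum>i\<in>A. N i \<omega>) \<le> x - l} - (\<Sum>r\<le>x - l. ?q r))))
    + (\<Sum>l\<le>x. ?q l * (\<sigma> * (prob {\<omega> \<in> space M. N a \<omega> \<le> x - l} - (\<Sum>r\<le>x - l. ?p r))))"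
    by (simp add: distrib_left sum_distrib_left mult.left_commute)
  also have "0 \<le> \<dots>"
  proof -
    have IH: "0 \<le> \<sigma> * (prob {\<omega> \<in> space M. (\<Sum>i\<in>A. N i \<omega>) \<le> y} - (\<Sum>r\<le>y. ?q r))" for y
      using insert.prems by (intro insert.IH) auto
    have compare_a: "0 \<le> \<sigma> * (prob {\<omega> \<in> space M. N a \<omega> \<le> y} - (\<Sum>r\<le>y. ?p r))" for y
      using insert.prems(3) by simp
    show ?thesis
      by (intro add_nonneg_nonneg sum_nonneg IH compare_a mult_nonneg_nonneg measure_nonneg
          Q_nonneg[OF adm_A])
  qed
  finally show ?case .
qed simp

lemma prob_atMost_LIMSEQ_1:
  fixes X :: "'a \<Rightarrow> nat"
  assumes "X \<in> M \<rightarrow>\<^sub>M count_space UNIV"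
  shows "(\<lambda>y. prob {\<omega> \<in> space M. X \<omega> \<le> y}) \<longlonglongrightarrow> 1"
proof -
  have "(\<lambda>y. prob {\<omega> \<in> space M. X \<omega> \<le> y}) \<longlonglongrightarrow> prob (\<Union>y. {\<omega> \<in> space M. X \<omega> \<le> y})"
    using assms by (intro finite_Lim_measure_incseq) (auto simp: incseq_def intro: sets_Collect_count_space_nat)
  moreover have "(\<Union>y. {\<omega> \<in> space M. X \<omega> \<le> y}) = space M"
    by auto
  ultimately show ?thesis
    by (simp add: prob_space)
qed

lemma prob_cdf_below_le:
  fixes X :: "'a \<Rightarrow> nat" and p :: "nat \<Rightarrow> real"
  assumes X: "X \<in> M \<rightarrow>\<^sub>M count_space UNIV" and p: "\<And>l. 0 \<le> p l" and d: "0 < d" "d < 1"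
    and le: "\<And>y. prob {\<omega> \<in> space M. X \<omega> \<le> y} \<le> (\<Sum>l\<le>y. p l)"
  shows "prob {\<omega> \<in> space M. (\<Sum>l\<le>X \<omega>. p l) < d} \<le> d"
proof -
  have mono: "(\<Sum>l\<le>x. p l) \<le> (\<Sum>l\<le>y. p l)" if "x \<le> y" for x y
    using p that by (intro sum_mono2) auto
  have "eventually (\<lambda>y. d < prob {\<omega> \<in> space M. X \<omega> \<le> y}) sequentially"
    using order_tendstoD(1)[OF prob_atMost_LIMSEQ_1[OF X], of d] d by simp
  then obtain y1 where "d < prob {\<omega> \<in> space M. X \<omega> \<le> y1}"
    by (auto simp: eventually_sequentially)
  then have y1: "d < (\<Sum>l\<le>y1. p l)"
    using le[of y1] by simp
  define D where "D = {y. (\<Sum>l\<le>y. p l) < d}"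
  have "D \<subseteq> {..<y1}"
  proof
    fix y assume "y \<in> D"
    then have "\<not> y1 \<le> y" using mono[of y1 y] y1 by (auto simp: D_def)
    then show "y \<in> {..<y1}" by simp
  qed
  then have "finite D"
    by (rule finite_subset) simp
  show ?thesis
  proof (cases "D = {}")
    case True
    then show ?thesis using d by (simp add: D_def)
  next
    case False
    define y2 where "y2 = Max D"
    have y2: "y2 \<in> D" "\<And>y. y \<in> D \<Longrightarrow> y \<le> y2"
      using \<open>finite D\<close> False by (auto simp: y2_def)
    have "(\<Sum>l\<le>y. p l) < d \<longleftrightarrow> y \<le> y2" for y
      using y2 mono[of y y2] by (auto simp: D_def)
    then have "{\<omega> \<in> space M. (\<Sum>l\<le>X \<omega>. p l) < d} = {\<omega> \<in> space M. X \<omega> \<le> y2}"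
      by simp
    then show ?thesis
      using le[of y2] y2(1) by (simp add: D_def)
  qed
qed

lemma prob_strict_cdf_above_le:
  fixes X :: "'a \<Rightarrow> nat" and p :: "nat \<Rightarrow> real"
  assumes X: "X \<in> M \<rightarrow>\<^sub>M count_space UNIV" and p: "\<And>l. 0 \<le> p l" and d: "0 < d" "d < 1"
    and ge: "\<And>y. (\<Sum>l\<le>y. p l) \<le> prob {\<omega> \<in> space M. X \<omega> \<le> y}"
  shows "prob {\<omega> \<in> space M. 1 - d < (\<Sum>l<X \<omega>. p l)} \<le> d"
proof (cases "\<exists>x. 1 - d < (\<Sum>l<x. p l)")
  case False
  then show ?thesis using d by simp
next
  case True
  define x0 where "x0 = (LEAST x. 1 - d < (\<Sum>l<x. p l))"
  have x0: "1 - d < (\<Sum>l<x0. p l)" and below: "\<And>x. x < x0 \<Longrightarrow> (\<Sum>l<x. p l) \<le> 1 - d"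
    unfolding x0_def using True by (auto intro: LeastI_ex dest: not_less_Least)
  have mono: "(\<Sum>l<x. p l) \<le> (\<Sum>l<y. p l)" if "x \<le> y" for x y
    using p that by (intro sum_mono2) auto
  obtain y where y: "x0 = Suc y"
    using x0 d by (cases x0) auto
  have "1 - d < (\<Sum>l<x. p l) \<longleftrightarrow> \<not> x \<le> y" for x
    using below[of x] x0 mono[of x0 x] y by (cases "x0 \<le> x") auto
  then have "{\<omega> \<in> space M. 1 - d < (\<Sum>l<X \<omega>. p l)} = space M - {\<omega> \<in> space M. X \<omega> \<le> y}"
    by auto
  then have "prob {\<omega> \<in> space M. 1 - d < (\<Sum>l<X \<omega>. p l)} = 1 - prob {\<omega> \<in> space M. X \<omega> \<le> y}"
    using prob_compl[OF sets_Collect_count_space_nat[OF X]] by simp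
  also have "\<dots> \<le> 1 - (\<Sum>l<x0. p l)"
    using ge[of y] y by (simp add: lessThan_Suc_atMost)
  finally show ?thesis
    using x0 by simp
qed

end

section \<open>Simultaneous coverage\<close>

lemma l_delta_le:
  assumes "mu \<in> Theta" "edf_cdf_strict fam phi V mu y \<le> 1 - delta"
  shows "l_delta fam Theta delta y V phi \<le> ereal mu"
  using assms unfolding l_delta_def Let_def by (auto intro!: Inf_lower)

lemma u_delta_ge:
  assumes "mu \<in> Theta" "delta \<le> edf_cdf fam phi V mu y"
  shows "ereal mu \<le> u_delta fam Theta delta y V phi"
  using assms unfolding u_delta_def Let_def by (auto intro!: Sup_upper)

lemma conf_L_cong:
  "(\<And>j k. (j, k) \<in> J \<Longrightarrow> f j k = g j k) \<Longrightarrow> conf_L J mu i f = conf_L J mu i g"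
  unfolding conf_L_def by (intro arg_cong[where f = Sup] image_cong) auto

lemma conf_U_cong:
  "(\<And>j k. (j, k) \<in> J \<Longrightarrow> f j k = g j k) \<Longrightarrow> conf_U J mu i f = conf_U J mu i g"
  unfolding conf_U_def by (intro arg_cong[where f = Inf] image_cong) auto

lemma conf_L_le:
  assumes "\<And>j k. (j, k) \<in> J \<Longrightarrow> b j k \<le> ereal (mu k)"
  shows "conf_L J mu i b \<le> ereal (mu i)"
  unfolding conf_L_def
proof (rule Sup_least)
  fix z assume "z \<in> (\<lambda>(j, k). b j k) ` {(j, k) \<in> J. mu k \<le> mu i}"
  then obtain j k where "(j, k) \<in> J" "mu k \<le> mu i" "z = b j k" by auto
  then show "z \<le> ereal (mu i)"
    using order_trans[OF assms, of j k "ereal (mu i)"] by simp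
qed

lemma conf_U_ge:
  assumes "\<And>j k. (j, k) \<in> J \<Longrightarrow> ereal (mu j) \<le> b j k"
  shows "ereal (mu i) \<le> conf_U J mu i b"
  unfolding conf_U_def
proof (rule Inf_greatest)
  fix z assume "z \<in> (\<lambda>(j, k). b j k) ` {(j, k) \<in> J. mu i \<le> mu j}"
  then obtain j k where "(j, k) \<in> J" "mu i \<le> mu j" "z = b j k" by auto
  then show "ereal (mu i) \<le> z"
    using order_trans[OF _ assms, of "ereal (mu i)" j k] by simp
qed

lemma AE_conf_bounds_cong:
  assumes "AE \<omega> in M. P \<omega>"
    and "\<And>\<omega> j k. P \<omega> \<Longrightarrow> (j, k) \<in> J \<Longrightarrow> l \<omega> j k = l' \<omega> j k \<and> u \<omega> j k = u' \<omega> j k"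
  shows "AE \<omega> in M. \<forall>i\<in>I. conf_L J mu i (l \<omega>) = conf_L J mu i (l' \<omega>)
    \<and> conf_U J mu i (u \<omega>) = conf_U J mu i (u' \<omega>)"
  using assms(1) by eventually_elim (auto intro!: conf_L_cong conf_U_cong dest: assms(2))

locale monotone_means_model = prob_space M
  for M :: "'a measure" +
  fixes n :: nat and N :: "nat \<Rightarrow> 'a \<Rightarrow> nat" and v mu :: "nat \<Rightarrow> real"
    and phi alpha delta :: real and J :: "(nat \<times> nat) set"
  assumes indep: "indep_vars (\<lambda>_. count_space UNIV) N {1..n}"
    and v_pos: "\<forall>i\<in>{1..n}. 0 < v i"
    and phi_pos: "0 < phi"
    and alpha: "0 < alpha" "alpha < 1"
    and J_sub: "J \<subseteq> {1..n} \<times> {1..n}"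
    and J_ord: "\<forall>(j, k)\<in>J. j \<le> k"
    and mu_mono: "\<forall>i\<in>{1..n}. \<forall>j\<in>{1..n}. i \<le> j \<longrightarrow> mu i \<le> mu j"
    and delta_eq: "delta = alpha / (2 * real (card J))"
begin

lemma N_measurable: "i \<in> {1..n} \<Longrightarrow> N i \<in> M \<rightarrow>\<^sub>M count_space UNIV"
  using indep by (auto simp: indep_vars_def)

lemma finite_J: "finite J"
  using J_sub by (rule finite_subset) simp

lemma delta_bounds:
  assumes "(j, k) \<in> J"
  shows "0 < delta" "delta < 1"
proof -
  have "1 \<le> real (card J)"
    using assms finite_J by (auto simp: Suc_le_eq card_gt_0_iff)
  then show "0 < delta" "delta < 1"
    using alpha unfolding delta_eq by (auto simp: field_simps)
qed

lemma block_subset: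
  assumes "(j, k) \<in> J"
  shows "{j..k} \<subseteq> {1..n}"
proof -
  have "j \<in> {1..n}" "k \<in> {1..n}"
    using assms J_sub by auto
  then show ?thesis
    by auto
qed

lemma block_ordered: "(j, k) \<in> J \<Longrightarrow> j \<le> k"
  using J_ord by auto

lemma vsum_block_pos:
  assumes "(j, k) \<in> J"
  shows "0 < vsum v j k"
  unfolding vsum_def using block_subset[OF assms] block_ordered[OF assms] v_pos
  by (intro sum_pos) auto

lemma Zjk_block_sum:
  assumes "(j, k) \<in> J"
  shows "Zjk phi v N \<omega> j k = phi * real (\<Sum>i = j..k. N i \<omega>) / vsum v j k"
proof -
  have "v i * (phi * real (N i \<omega>) / v i) = phi * real (N i \<omega>)" if "i \<in> {j..k}" for i
  proof -
    have "0 < v i"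
      using that block_subset[OF assms] v_pos by auto
    then show ?thesis
      by simp
  qed
  then show ?thesis
    by (simp add: Zjk_def sum_distrib_left)
qed

lemma block_sum_measurable:
  assumes "(j, k) \<in> J"
  shows "(\<lambda>\<omega>. \<Sum>i = j..k. N i \<omega>) \<in> M \<rightarrow>\<^sub>M count_space UNIV"
  using block_subset[OF assms] by (intro measurable_sum_count_space_nat N_measurable) auto

lemma sets_Collect_block_Z:
  "(j, k) \<in> J \<Longrightarrow> {\<omega> \<in> space M. P (Zjk phi v N \<omega> j k)} \<in> events"
  using sets_Collect_count_space_nat[OF block_sum_measurable, of j k "\<lambda>x. P (phi * real x / vsum v j k)"]
  by (simp add: Zjk_block_sum)

lemma sets_Collect_conf_bounds:
  "{\<omega> \<in> space M. \<forall>i\<in>{1..n}.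
      conf_L J mu i (\<lambda>j k. l (Zjk phi v N \<omega> j k) (vsum v j k)) \<le> ereal (mu i)
    \<and> ereal (mu i) \<le> conf_U J mu i (\<lambda>j k. u (Zjk phi v N \<omega> j k) (vsum v j k))} \<in> events"
proof (rule sets_Collect_determined_by_finite[of "{1..n}" N])
  fix \<omega> \<omega>' assume agree: "\<And>i. i \<in> {1..n} \<Longrightarrow> N i \<omega> = N i \<omega>'"
  have "Zjk phi v N \<omega> j k = Zjk phi v N \<omega>' j k" if "(j, k) \<in> J" for j k
    using agree block_subset[OF that] by (auto simp: Zjk_block_sum[OF that] intro!: sum.cong)
  then have "conf_L J mu i (\<lambda>j k. l (Zjk phi v N \<omega> j k) (vsum v j k)) =
      conf_L J mu i (\<lambda>j k. l (Zjk phi v N \<omega>' j k) (vsum v j k))"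
    and "conf_U J mu i (\<lambda>j k. u (Zjk phi v N \<omega> j k) (vsum v j k)) =
      conf_U J mu i (\<lambda>j k. u (Zjk phi v N \<omega>' j k) (vsum v j k))" for i
    by (auto intro!: conf_L_cong conf_U_cong)
  then show "(\<forall>i\<in>{1..n}. conf_L J mu i (\<lambda>j k. l (Zjk phi v N \<omega> j k) (vsum v j k)) \<le> ereal (mu i)
      \<and> ereal (mu i) \<le> conf_U J mu i (\<lambda>j k. u (Zjk phi v N \<omega> j k) (vsum v j k))) =
    (\<forall>i\<in>{1..n}. conf_L J mu i (\<lambda>j k. l (Zjk phi v N \<omega>' j k) (vsum v j k)) \<le> ereal (mu i)
      \<and> ereal (mu i) \<le> conf_U J mu i (\<lambda>j k. u (Zjk phi v N \<omega>' j k) (vsum v j k)))"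
    by simp
qed (use N_measurable in auto)

end

locale monotone_means_family =
  monotone_means_model M n N v mu phi alpha delta J + count_family fam phi Theta admissible
  for M :: "'a measure" and n N v mu phi alpha delta J fam Theta admissible +
  assumes pmf: "\<And>i l. i \<in> {1..n} \<Longrightarrow> prob {\<omega> \<in> space M. N i \<omega> = l} = fam phi (v i) (mu i) l"
    and v_admissible: "\<And>i. i \<in> {1..n} \<Longrightarrow> admissible (v i)"
    and mu_in_Theta: "\<And>i. i \<in> {1..n} \<Longrightarrow> mu i \<in> Theta"
begin

lemma cdf_N: "i \<in> {1..n} \<Longrightarrow> prob {\<omega> \<in> space M. N i \<omega> \<le> x} = (\<Sum>l\<le>x. fam phi (v i) (mu i) l)"
  using prob_le_eq_sum[OF N_measurable, of i "\<lambda>_ _. True" x] by (simp add: pmf)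

lemma vsum_admissible:
  assumes "(j, k) \<in> J"
  shows "admissible (vsum v j k)"
  unfolding vsum_def using block_subset[OF assms] block_ordered[OF assms]
  by (intro sum_closed_nonempty[of admissible] admissible_add v_admissible) auto

lemma block_cdf_compare:
  assumes "(j, k) \<in> J" "m0 \<in> Theta"
    and "\<And>i x. i \<in> {j..k} \<Longrightarrow> 0 \<le> \<sigma> * ((\<Sum>l\<le>x. fam phi (v i) (mu i) l) - (\<Sum>l\<le>x. fam phi (v i) m0 l))"
  shows "0 \<le> \<sigma> * (prob {\<omega> \<in> space M. (\<Sum>i = j..k. N i \<omega>) \<le> x} - (\<Sum>l\<le>x. fam phi (vsum v j k) m0 l))"
  unfolding vsum_def
proof (rule indep_sum_cdf_compare[where adm = admissible and Q = "\<lambda>V. fam phi V m0",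
      OF indep admissible_add])
  show "finite {j..k}" "{j..k} \<noteq> {}" "{j..k} \<subseteq> {1..n}"
    using block_subset[OF assms(1)] block_ordered[OF assms(1)] by auto
  then show "\<And>i x. i \<in> {j..k} \<Longrightarrow> 0 \<le> \<sigma> * (prob {\<omega> \<in> space M. N i \<omega> \<le> x} - (\<Sum>l\<le>x. fam phi (v i) m0 l))"
    "\<And>i. i \<in> {j..k} \<Longrightarrow> admissible (v i)"
    using assms(3) cdf_N v_admissible by auto
qed (use assms(2) fam_nonneg fam_conv in auto)

lemma block_cdf_ge:
  assumes "(j, k) \<in> J"
  shows "(\<Sum>l\<le>x. fam phi (vsum v j k) (mu k) l) \<le> prob {\<omega> \<in> space M. (\<Sum>i = j..k. N i \<omega>) \<le> x}"
proof -
  have k: "k \<in> {1..n}" and sub: "{j..k} \<subseteq> {1..n}"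
    using block_subset[OF assms] block_ordered[OF assms] by auto
  have "0 \<le> 1 * (prob {\<omega> \<in> space M. (\<Sum>i = j..k. N i \<omega>) \<le> x} - (\<Sum>l\<le>x. fam phi (vsum v j k) (mu k) l))"
  proof (rule block_cdf_compare[OF assms mu_in_Theta[OF k]])
    fix i y assume "i \<in> {j..k}"
    then have "i \<in> {1..n}" "mu i \<le> mu k"
      using sub k mu_mono by auto
    then show "0 \<le> 1 * ((\<Sum>l\<le>y. fam phi (v i) (mu i) l) - (\<Sum>l\<le>y. fam phi (v i) (mu k) l))"
      using fam_cdf_antimono[OF v_admissible mu_in_Theta mu_in_Theta[OF k]] by simp
  qed
  then show ?thesis by simp
qed

lemma block_cdf_le:
  assumes "(j, k) \<in> J"
  shows "prob {\<omega> \<in> space M. (\<Sum>i = j..k. N i \<omega>) \<le> x} \<le> (\<Sum>l\<le>x. fam phi (vsum v j k) (mu j) l)"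
proof -
  have j: "j \<in> {1..n}" and sub: "{j..k} \<subseteq> {1..n}"
    using block_subset[OF assms] block_ordered[OF assms] by auto
  have "0 \<le> - 1 * (prob {\<omega> \<in> space M. (\<Sum>i = j..k. N i \<omega>) \<le> x} - (\<Sum>l\<le>x. fam phi (vsum v j k) (mu j) l))"
  proof (rule block_cdf_compare[OF assms mu_in_Theta[OF j]])
    fix i y assume "i \<in> {j..k}"
    then have "i \<in> {1..n}" "mu j \<le> mu i"
      using sub j mu_mono by auto
    then show "0 \<le> - 1 * ((\<Sum>l\<le>y. fam phi (v i) (mu i) l) - (\<Sum>l\<le>y. fam phi (v i) (mu j) l))"
      using fam_cdf_antimono[OF v_admissible mu_in_Theta[OF j] mu_in_Theta] by simp
  qed
  then show ?thesis by simp
qed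

lemma prob_lower_bad_le:
  assumes "(j, k) \<in> J"
  shows "prob {\<omega> \<in> space M. 1 - delta < edf_cdf_strict fam phi (vsum v j k) (mu k) (Zjk phi v N \<omega> j k)}
    \<le> delta"
proof -
  have k: "k \<in> {1..n}"
    using block_subset[OF assms] block_ordered[OF assms] by auto
  have "prob {\<omega> \<in> space M. 1 - delta < (\<Sum>l<(\<Sum>i = j..k. N i \<omega>). fam phi (vsum v j k) (mu k) l)} \<le> delta"
    using delta_bounds block_cdf_ge[OF assms] assms mu_in_Theta[OF k] vsum_admissible[OF assms]
    by (intro prob_strict_cdf_above_le[OF block_sum_measurable[OF assms]] fam_nonneg) auto
  then show ?thesis
    by (simp only: Zjk_block_sum[OF assms] edf_cdf_strict_at_lattice[OF phi_pos vsum_block_pos[OF assms]])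
qed

lemma prob_upper_bad_le:
  assumes "(j, k) \<in> J"
  shows "prob {\<omega> \<in> space M. edf_cdf fam phi (vsum v j k) (mu j) (Zjk phi v N \<omega> j k) < delta} \<le> delta"
proof -
  have j: "j \<in> {1..n}"
    using block_subset[OF assms] block_ordered[OF assms] by auto
  have "prob {\<omega> \<in> space M. (\<Sum>l\<le>(\<Sum>i = j..k. N i \<omega>). fam phi (vsum v j k) (mu j) l) < delta} \<le> delta"
    using delta_bounds block_cdf_le[OF assms] assms mu_in_Theta[OF j] vsum_admissible[OF assms]
    by (intro prob_cdf_below_le[OF block_sum_measurable[OF assms]] fam_nonneg) auto
  then show ?thesis
    by (simp only: Zjk_block_sum[OF assms] edf_cdf_at_lattice[OF phi_pos vsum_block_pos[OF assms]])
qed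

theorem coverage:
  "1 - alpha \<le> prob {\<omega> \<in> space M. \<forall>i\<in>{1..n}.
      conf_L J mu i (\<lambda>j k. l_delta fam Theta delta (Zjk phi v N \<omega> j k) (vsum v j k) phi) \<le> ereal (mu i)
    \<and> ereal (mu i) \<le> conf_U J mu i (\<lambda>j k. u_delta fam Theta delta (Zjk phi v N \<omega> j k) (vsum v j k) phi)}"
  (is "_ \<le> prob ?G")
proof (cases "J = {}")
  case True
  then have "?G = space M"
    by (auto simp: conf_L_def conf_U_def)
  then show ?thesis
    using alpha by (simp add: prob_space)
next
  case False
  define bad where "bad = (\<lambda>(j, k).
    {\<omega> \<in> space M. 1 - delta < edf_cdf_strict fam phi (vsum v j k) (mu k) (Zjk phi v N \<omega> j k)} \<union>
    {\<omega> \<in> space M. edf_cdf fam phi (vsum v j k) (mu j) (Zjk phi v N \<omega> j k) < delta})"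
  have bad_sets: "bad jk \<in> events" if "jk \<in> J" for jk
    using that by (cases jk) (auto simp: bad_def intro!: sets_Collect_block_Z)
  have bad_le: "prob (bad jk) \<le> 2 * delta" if "jk \<in> J" for jk
  proof -
    obtain j k where jk: "jk = (j, k)" by (cases jk)
    with that have "(j, k) \<in> J" by simp
    have "prob (bad jk) \<le>
        prob {\<omega> \<in> space M. 1 - delta < edf_cdf_strict fam phi (vsum v j k) (mu k) (Zjk phi v N \<omega> j k)}
      + prob {\<omega> \<in> space M. edf_cdf fam phi (vsum v j k) (mu j) (Zjk phi v N \<omega> j k) < delta}"
      unfolding jk bad_def by (auto intro!: measure_Un_le sets_Collect_block_Z[OF \<open>(j, k) \<in> J\<close>])
    also have "\<dots> \<le> delta + delta"
      using prob_lower_bad_le[OF \<open>(j, k) \<in> J\<close>] prob_upper_bad_le[OF \<open>(j, k) \<in> J\<close>] by (rule add_mono)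
    finally show ?thesis by simp
  qed
  have "prob (\<Union>jk\<in>J. bad jk) \<le> (\<Sum>jk\<in>J. prob (bad jk))"
    using bad_sets by (intro finite_measure_subadditive_finite[OF finite_J]) auto
  also have "\<dots> \<le> (\<Sum>jk\<in>J. 2 * delta)"
    using bad_le by (rule sum_mono)
  also have "\<dots> = alpha"
    using False finite_J unfolding delta_eq by simp
  finally have "prob (\<Union>jk\<in>J. bad jk) \<le> alpha" .
  moreover have "space M - (\<Union>jk\<in>J. bad jk) \<subseteq> ?G"
  proof
    fix \<omega> assume \<omega>: "\<omega> \<in> space M - (\<Union>jk\<in>J. bad jk)"
    have "l_delta fam Theta delta (Zjk phi v N \<omega> j k) (vsum v j k) phi \<le> ereal (mu k)"
      and "ereal (mu j) \<le> u_delta fam Theta delta (Zjk phi v N \<omega> j k) (vsum v j k) phi"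
      if "(j, k) \<in> J" for j k
      using \<omega> that block_subset[OF that] block_ordered[OF that]
      by (auto simp: bad_def intro!: l_delta_le u_delta_ge mu_in_Theta)
    then show "\<omega> \<in> ?G"
      using \<omega> by (auto intro!: conf_L_le conf_U_ge)
  qed
  then have "prob (space M - (\<Union>jk\<in>J. bad jk)) \<le> prob ?G"
    by (intro finite_measure_mono sets_Collect_conf_bounds)
  ultimately show ?thesis
    using prob_compl[of "\<Union>jk\<in>J. bad jk"] bad_sets finite_J by auto
qed

end

context monotone_means_model
begin

lemma binomial_block_bounds_eq:
  assumes "(j, k) \<in> J" "\<forall>i\<in>{1..n}. v i / phi = real (m i)" "\<forall>i\<in>{1..n}. N i \<omega> \<le> m i"
  shows "l_delta bin_fam {0<..<1} delta (Zjk phi v N \<omega> j k) (vsum v j k) phi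
      = ereal (q_B delta (vsum v j k * Zjk phi v N \<omega> j k / phi)
          (1 + vsum v j k / phi - vsum v j k * Zjk phi v N \<omega> j k / phi) * of_bool (Zjk phi v N \<omega> j k > 0))"
      (is ?l)
    and "u_delta bin_fam {0<..<1} delta (Zjk phi v N \<omega> j k) (vsum v j k) phi
      = ereal (q_B (1 - delta) (1 + vsum v j k * Zjk phi v N \<omega> j k / phi)
          (vsum v j k / phi - vsum v j k * Zjk phi v N \<omega> j k / phi) * of_bool (Zjk phi v N \<omega> j k < 1)
        + of_bool (Zjk phi v N \<omega> j k = 1))"
      (is ?u)
proof -
  have "vsum v j k / phi = real (\<Sum>i = j..k. m i)"
    using block_subset[OF assms(1)] assms(2) unfolding vsum_def sum_divide_distrib
    by (auto intro!: sum.cong)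
  moreover have "(\<Sum>i = j..k. N i \<omega>) \<le> (\<Sum>i = j..k. m i)"
    using block_subset[OF assms(1)] assms(3) by (intro sum_mono) auto
  ultimately show ?l ?u
    using binomial_l_delta_eq[OF phi_pos vsum_block_pos[OF assms(1)] _ _ Zjk_block_sum[OF assms(1)]]
      binomial_u_delta_eq[OF phi_pos vsum_block_pos[OF assms(1)] _ _ Zjk_block_sum[OF assms(1)]]
      delta_bounds[OF assms(1)] by blast+
qed

lemma binomial_case:
  assumes "\<forall>i\<in>{1..n}. v i / phi \<in> \<nat> \<and> 0 < mu i \<and> mu i < 1 \<and>
        (\<forall>l. measure M {\<omega> \<in> space M. N i \<omega> = l} = bin_fam phi (v i) (mu i) l)"
  shows "measure M {\<omega> \<in> space M. \<forall>i\<in>{1..n}.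
          conf_L J mu i (\<lambda>j k. l_delta bin_fam {0<..<1} delta (Zjk phi v N \<omega> j k) (vsum v j k) phi) \<le> ereal (mu i)
        \<and> ereal (mu i) \<le> conf_U J mu i (\<lambda>j k. u_delta bin_fam {0<..<1} delta (Zjk phi v N \<omega> j k) (vsum v j k) phi)}
        \<ge> 1 - alpha
    \<and> (AE \<omega> in M. \<forall>i\<in>{1..n}.
          conf_L J mu i (\<lambda>j k. l_delta bin_fam {0<..<1} delta (Zjk phi v N \<omega> j k) (vsum v j k) phi)
          = conf_L J mu i (\<lambda>j k. ereal
              (q_B delta (vsum v j k * Zjk phi v N \<omega> j k / phi)
                   (1 + vsum v j k / phi - vsum v j k * Zjk phi v N \<omega> j k / phi)
               * of_bool (Zjk phi v N \<omega> j k > 0)))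
        \<and> conf_U J mu i (\<lambda>j k. u_delta bin_fam {0<..<1} delta (Zjk phi v N \<omega> j k) (vsum v j k) phi)
          = conf_U J mu i (\<lambda>j k. ereal
              (q_B (1 - delta) (1 + vsum v j k * Zjk phi v N \<omega> j k / phi)
                   (vsum v j k / phi - vsum v j k * Zjk phi v N \<omega> j k / phi)
               * of_bool (Zjk phi v N \<omega> j k < 1)
               + of_bool (Zjk phi v N \<omega> j k = 1))))"
proof -
  interpret monotone_means_family M n N v mu phi alpha delta J bin_fam "{0<..<1}" "\<lambda>V. 0 < V \<and> V / phi \<in> \<nat>"
    using count_family_binomial[OF phi_pos] assms v_pos
    by intro_locales (auto intro!: monotone_means_family_axioms.intro)
  define m where "m i = nat \<lfloor>v i / phi\<rfloor>" for i
  have m: "\<forall>i\<in>{1..n}. v i / phi = real (m i)"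
  proof
    fix i assume "i \<in> {1..n}"
    then have "v i / phi \<in> \<nat>"
      using assms by auto
    then show "v i / phi = real (m i)"
      by (auto simp: m_def elim!: Nats_cases)
  qed
  \<comment> \<open>The binomial closed forms need \<open>Z\<^sub>j\<^sub>:\<^sub>k \<le> 1\<close>, which holds only almost surely.\<close>
  have "AE \<omega> in M. N i \<omega> \<le> m i" if "i \<in> {1..n}" for i
  proof -
    have "prob {\<omega> \<in> space M. N i \<omega> \<le> m i} = 1"
      using cdf_N[OF that] by (simp add: bin_fam_def m_def bin_pf_sum_all)
    then show ?thesis
      by (auto dest: AE_prob_1)
  qed
  then have "AE \<omega> in M. \<forall>i\<in>{1..n}. N i \<omega> \<le> m i"
    by (intro AE_finite_allI) auto
  then show ?thesis
    by (intro conjI coverage AE_conf_bounds_cong binomial_block_bounds_eq[where m = m] m)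
qed

lemma poisson_case:
  assumes "\<forall>i\<in>{1..n}. 0 < mu i \<and>
        (\<forall>l. measure M {\<omega> \<in> space M. N i \<omega> = l} = poi_fam phi (v i) (mu i) l)"
  shows "measure M {\<omega> \<in> space M. \<forall>i\<in>{1..n}.
          conf_L J mu i (\<lambda>j k. l_delta poi_fam {0<..} delta (Zjk phi v N \<omega> j k) (vsum v j k) phi) \<le> ereal (mu i)
        \<and> ereal (mu i) \<le> conf_U J mu i (\<lambda>j k. u_delta poi_fam {0<..} delta (Zjk phi v N \<omega> j k) (vsum v j k) phi)}
        \<ge> 1 - alpha
    \<and> (AE \<omega> in M. \<forall>i\<in>{1..n}.
          conf_L J mu i (\<lambda>j k. l_delta poi_fam {0<..} delta (Zjk phi v N \<omega> j k) (vsum v j k) phi)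
          = conf_L J mu i (\<lambda>j k. ereal
              (phi * q_Gamma delta (vsum v j k * Zjk phi v N \<omega> j k / phi) 1 / vsum v j k
               * of_bool (Zjk phi v N \<omega> j k > 0)))
        \<and> conf_U J mu i (\<lambda>j k. u_delta poi_fam {0<..} delta (Zjk phi v N \<omega> j k) (vsum v j k) phi)
          = conf_U J mu i (\<lambda>j k. ereal
              (phi * q_Gamma (1 - delta) (1 + vsum v j k * Zjk phi v N \<omega> j k / phi) 1 / vsum v j k)))"
proof -
  interpret monotone_means_family M n N v mu phi alpha delta J poi_fam "{0<..}" "\<lambda>V. 0 < V"
    using count_family_poisson[OF phi_pos] assms v_pos
    by intro_locales (auto intro!: monotone_means_family_axioms.intro)
  show ?thesis
    by (intro conjI coverage AE_conf_bounds_cong[where P = "\<lambda>_. True"] AE_I2 TrueI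
        poisson_l_delta_eq[OF phi_pos vsum_block_pos Zjk_block_sum delta_bounds]
        poisson_u_delta_eq[OF phi_pos vsum_block_pos Zjk_block_sum delta_bounds])
qed

lemma negbin_case:
  assumes "\<forall>i\<in>{1..n}. 0 < mu i \<and>
        (\<forall>l. measure M {\<omega> \<in> space M. N i \<omega> = l} = nb_fam phi (v i) (mu i) l)"
  shows "measure M {\<omega> \<in> space M. \<forall>i\<in>{1..n}.
          conf_L J mu i (\<lambda>j k. l_delta nb_fam {0<..} delta (Zjk phi v N \<omega> j k) (vsum v j k) phi) \<le> ereal (mu i)
        \<and> ereal (mu i) \<le> conf_U J mu i (\<lambda>j k. u_delta nb_fam {0<..} delta (Zjk phi v N \<omega> j k) (vsum v j k) phi)}
        \<ge> 1 - alpha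
    \<and> (AE \<omega> in M. \<forall>i\<in>{1..n}.
          conf_L J mu i (\<lambda>j k. l_delta nb_fam {0<..} delta (Zjk phi v N \<omega> j k) (vsum v j k) phi)
          = conf_L J mu i (\<lambda>j k. ereal
              (q_B delta (vsum v j k * Zjk phi v N \<omega> j k / phi) (vsum v j k / phi)
               / (1 - q_B delta (vsum v j k * Zjk phi v N \<omega> j k / phi) (vsum v j k / phi))
               * of_bool (Zjk phi v N \<omega> j k > 0)))
        \<and> conf_U J mu i (\<lambda>j k. u_delta nb_fam {0<..} delta (Zjk phi v N \<omega> j k) (vsum v j k) phi)
          = conf_U J mu i (\<lambda>j k. ereal
              (q_B (1 - delta) (1 + vsum v j k * Zjk phi v N \<omega> j k / phi) (vsum v j k / phi)
               / (1 - q_B (1 - delta) (1 + vsum v j k * Zjk phi v N \<omega> j k / phi) (vsum v j k / phi)))))"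
proof -
  interpret monotone_means_family M n N v mu phi alpha delta J nb_fam "{0<..}" "\<lambda>V. 0 < V"
    using count_family_negbin[OF phi_pos] assms v_pos
    by intro_locales (auto intro!: monotone_means_family_axioms.intro)
  show ?thesis
    by (intro conjI coverage AE_conf_bounds_cong[where P = "\<lambda>_. True"] AE_I2 TrueI
        negbin_l_delta_eq[OF phi_pos vsum_block_pos Zjk_block_sum delta_bounds]
        negbin_u_delta_eq[OF phi_pos vsum_block_pos Zjk_block_sum delta_bounds])
qed

end

theorem proposition5p1:
  fixes M :: "'a measure" and n :: nat and N :: "nat \<Rightarrow> 'a \<Rightarrow> nat"
    and v mu :: "nat \<Rightarrow> real" and phi alpha delta :: real and J :: "(nat \<times> nat) set"
  assumes "prob_space M"
    and indep: "prob_space.indep_vars M (\<lambda>_. count_space UNIV) N {1..n}"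
    and v_pos: "\<forall>i\<in>{1..n}. 0 < v i"
    and phi_pos: "0 < phi"
    and alpha: "0 < alpha" "alpha < 1"
    and J_sub: "J \<subseteq> {1..n} \<times> {1..n}"
    and J_ord: "\<forall>(j, k)\<in>J. j \<le> k"
    and mu_mono: "\<forall>i\<in>{1..n}. \<forall>j\<in>{1..n}. i \<le> j \<longrightarrow> mu i \<le> mu j"
    and delta_def: "delta = alpha / (2 * real (card J))"
  shows
   "((\<forall>i\<in>{1..n}. v i / phi \<in> \<nat> \<and> 0 < mu i \<and> mu i < 1 \<and>
        (\<forall>l. measure M {\<omega> \<in> space M. N i \<omega> = l} = bin_fam phi (v i) (mu i) l)) \<longrightarrow>
      measure M {\<omega> \<in> space M. \<forall>i\<in>{1..n}.
          conf_L J mu i (\<lambda>j k. l_delta bin_fam {0<..<1} delta (Zjk phi v N \<omega> j k) (vsum v j k) phi) \<le> ereal (mu i)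
        \<and> ereal (mu i) \<le> conf_U J mu i (\<lambda>j k. u_delta bin_fam {0<..<1} delta (Zjk phi v N \<omega> j k) (vsum v j k) phi)}
        \<ge> 1 - alpha
    \<and> (AE \<omega> in M. \<forall>i\<in>{1..n}.
          conf_L J mu i (\<lambda>j k. l_delta bin_fam {0<..<1} delta (Zjk phi v N \<omega> j k) (vsum v j k) phi)
          = conf_L J mu i (\<lambda>j k. ereal
              (q_B delta (vsum v j k * Zjk phi v N \<omega> j k / phi)
                   (1 + vsum v j k / phi - vsum v j k * Zjk phi v N \<omega> j k / phi)
               * of_bool (Zjk phi v N \<omega> j k > 0)))
        \<and> conf_U J mu i (\<lambda>j k. u_delta bin_fam {0<..<1} delta (Zjk phi v N \<omega> j k) (vsum v j k) phi)
          = conf_U J mu i (\<lambda>j k. ereal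
              (q_B (1 - delta) (1 + vsum v j k * Zjk phi v N \<omega> j k / phi)
                   (vsum v j k / phi - vsum v j k * Zjk phi v N \<omega> j k / phi)
               * of_bool (Zjk phi v N \<omega> j k < 1)
               + of_bool (Zjk phi v N \<omega> j k = 1)))))
  \<and> ((\<forall>i\<in>{1..n}. 0 < mu i \<and>
        (\<forall>l. measure M {\<omega> \<in> space M. N i \<omega> = l} = poi_fam phi (v i) (mu i) l)) \<longrightarrow>
      measure M {\<omega> \<in> space M. \<forall>i\<in>{1..n}.
          conf_L J mu i (\<lambda>j k. l_delta poi_fam {0<..} delta (Zjk phi v N \<omega> j k) (vsum v j k) phi) \<le> ereal (mu i)
        \<and> ereal (mu i) \<le> conf_U J mu i (\<lambda>j k. u_delta poi_fam {0<..} delta (Zjk phi v N \<omega> j k) (vsum v j k) phi)}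
        \<ge> 1 - alpha
    \<and> (AE \<omega> in M. \<forall>i\<in>{1..n}.
          conf_L J mu i (\<lambda>j k. l_delta poi_fam {0<..} delta (Zjk phi v N \<omega> j k) (vsum v j k) phi)
          = conf_L J mu i (\<lambda>j k. ereal
              (phi * q_Gamma delta (vsum v j k * Zjk phi v N \<omega> j k / phi) 1 / vsum v j k
               * of_bool (Zjk phi v N \<omega> j k > 0)))
        \<and> conf_U J mu i (\<lambda>j k. u_delta poi_fam {0<..} delta (Zjk phi v N \<omega> j k) (vsum v j k) phi)
          = conf_U J mu i (\<lambda>j k. ereal
              (phi * q_Gamma (1 - delta) (1 + vsum v j k * Zjk phi v N \<omega> j k / phi) 1 / vsum v j k))))
  \<and> ((\<forall>i\<in>{1..n}. 0 < mu i \<and>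
        (\<forall>l. measure M {\<omega> \<in> space M. N i \<omega> = l} = nb_fam phi (v i) (mu i) l)) \<longrightarrow>
      measure M {\<omega> \<in> space M. \<forall>i\<in>{1..n}.
          conf_L J mu i (\<lambda>j k. l_delta nb_fam {0<..} delta (Zjk phi v N \<omega> j k) (vsum v j k) phi) \<le> ereal (mu i)
        \<and> ereal (mu i) \<le> conf_U J mu i (\<lambda>j k. u_delta nb_fam {0<..} delta (Zjk phi v N \<omega> j k) (vsum v j k) phi)}
        \<ge> 1 - alpha
    \<and> (AE \<omega> in M. \<forall>i\<in>{1..n}.
          conf_L J mu i (\<lambda>j k. l_delta nb_fam {0<..} delta (Zjk phi v N \<omega> j k) (vsum v j k) phi)
          = conf_L J mu i (\<lambda>j k. ereal
              (q_B delta (vsum v j k * Zjk phi v N \<omega> j k / phi) (vsum v j k / phi)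
               / (1 - q_B delta (vsum v j k * Zjk phi v N \<omega> j k / phi) (vsum v j k / phi))
               * of_bool (Zjk phi v N \<omega> j k > 0)))
        \<and> conf_U J mu i (\<lambda>j k. u_delta nb_fam {0<..} delta (Zjk phi v N \<omega> j k) (vsum v j k) phi)
          = conf_U J mu i (\<lambda>j k. ereal
              (q_B (1 - delta) (1 + vsum v j k * Zjk phi v N \<omega> j k / phi) (vsum v j k / phi)
               / (1 - q_B (1 - delta) (1 + vsum v j k * Zjk phi v N \<omega> j k / phi) (vsum v j k / phi))))))"
proof -
  interpret monotone_means_model M n N v mu phi alpha delta J
    using assms by (intro monotone_means_model.intro monotone_means_model_axioms.intro)
  show ?thesis
    using binomial_case poisson_case negbin_case by blast
qed

end
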